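(* Let $\mathcal{M}=[0,S)\times_h\mathbb{S}^{N-1}$ be a model manifold with pole $O$, let $\Omega\subset\mathcal{M}$ be a bounded $C^1$ domain containing $O$, and let $R_1=\min_{\partial\Omega}r$, $R_2=\max_{\partial\Omega}r$. Suppose that $h'(r)<0$ for $r$ in an interval $(R_0,R)$ with $[R_0,R]\subset(0,S)$, and that $(R_1,R_2)\subset(R_0,R)$. Let $\kappa_0\in\mathbb{R}$ and let $\varphi\in C^1([R_0,R])$ satisfy $\varphi'(r)\ge -h(r)$ for all $r\in[R_0,R]$. If the overdetermined problem $$-\Delta u=N\,h'(r)\ \text{in }\Omega,\qquad u=\varphi(r)\ \text{on }\partial\Omega,\qquad u_\nu=\kappa_0\ \text{on }\partial\Omega$$ has a classical solution $u\in C^2(\Omega)\cap C^1(\overline\Omega)$, then $u$ is radial and $\Omega$ is a geodesic ball centered at $O$.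
   Context: Model manifold: $N\ge2$, $S\in(0,+\infty]$, $h\in C^\infty([0,S))$ with $h>0$ on $(0,S)$, $h'(0)=1$, $h^{(2k)}(0)=0$ for all $k\ge0$; $\mathcal{M}$ is $[0,S)\times\mathbb{S}^{N-1}$ with $\{0\}\times\mathbb{S}^{N-1}$ identified to the pole $O$, metric $dr^2+h(r)^2g_{\mathbb{S}^{N-1}}$; $r$ is geodesic distance to $O$, $B_\rho(O)=\{r<\rho\}$, $\Delta$ the Laplace–Beltrami operator; radial means depending only on $r$; $\nu$ is the outward unit normal to $\partial\Omega$, $u_\nu=\partial u/\partial\nu$. *)

theory Defs
  imports "HOL-Analysis.Analysis"
begin

text \<open>The model manifold [0,S) x_h S^(N-1) is represented in geodesic polar
  (normal) coordinates as the set of x in R^N with ereal (norm x) < S, the pole O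
  being 0 and r = norm x.  In these coordinates the metric is
  g_x = e e^T + (h r / r)^2 (I - e e^T), e = x / r (x \<noteq> 0), g_0 = I.\<close>

definition model_space :: "ereal \<Rightarrow> (real^'n) set" where
  "model_space S = {x. ereal (norm x) < S}"

definition smooth_profile :: "ereal \<Rightarrow> (real \<Rightarrow> real) \<Rightarrow> (nat \<Rightarrow> real \<Rightarrow> real) \<Rightarrow> bool" where
  "smooth_profile S h D \<longleftrightarrow>
     (\<forall>r. 0 \<le> r \<and> ereal r < S \<longrightarrow> D 0 r = h r) \<and>
     (\<forall>k r. 0 \<le> r \<and> ereal r < S \<longrightarrow>
        (D k has_real_derivative D (Suc k) r) (at r within {t. 0 \<le> t \<and> ereal t < S}))"

text \<open>Inverse metric g^{-1}_x applied to a covector w (given as a vector).\<close>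
definition ginv :: "(real \<Rightarrow> real) \<Rightarrow> real^'n \<Rightarrow> real^'n \<Rightarrow> real^'n" where
  "ginv h x w = (if x = 0 then w else
     (let \<rho> = h (norm x) / norm x; e = x /\<^sub>R norm x in
        (1 / \<rho>^2) *\<^sub>R w + ((1 - 1 / \<rho>^2) * (e \<bullet> w)) *\<^sub>R e))"

definition egrad :: "(real^'n \<Rightarrow> real) \<Rightarrow> real^'n \<Rightarrow> real^'n" where
  "egrad u x = (\<chi> i. frechet_derivative u (at x) (axis i 1))"

definition ediv :: "(real^'n \<Rightarrow> real^'n) \<Rightarrow> real^'n \<Rightarrow> real" where
  "ediv V x = (\<Sum>i\<in>UNIV. frechet_derivative V (at x) (axis i 1) $ i)"

text \<open>Laplace-Beltrami operator in coordinates, at x \<noteq> 0: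
  Delta u = (det g)^(-1/2) div((det g)^(1/2) g^{-1} grad u), with (det g)^(1/2) = (h r / r)^(N-1).\<close>
definition laplace_beltrami :: "(real \<Rightarrow> real) \<Rightarrow> (real^'n \<Rightarrow> real) \<Rightarrow> real^'n \<Rightarrow> real" where
  "laplace_beltrami h u x =
     (let vol = (\<lambda>y::real^'n. (h (norm y) / norm y) ^ (CARD('n) - 1)) in
       (1 / vol x) * ediv (\<lambda>y. vol y *\<^sub>R ginv h y (egrad u y)) x)"

definition C2_on :: "(real^'n) set \<Rightarrow> (real^'n \<Rightarrow> real) \<Rightarrow> bool" where
  "C2_on A u \<longleftrightarrow> (\<forall>x\<in>A. u differentiable (at x)) \<and> (\<forall>x\<in>A. egrad u differentiable (at x)) \<and>
     (\<forall>i j. continuous_on A (\<lambda>x. frechet_derivative (egrad u) (at x) (axis i 1) $ j))"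

definition C1_defining :: "(real^'n) set \<Rightarrow> (real^'n) set \<Rightarrow> (real^'n \<Rightarrow> real) \<Rightarrow> (real^'n \<Rightarrow> real^'n) \<Rightarrow> bool" where
  "C1_defining \<Omega> U \<psi> D\<psi> \<longleftrightarrow> open U \<and>
     (\<forall>x\<in>U. (\<psi> has_derivative (\<lambda>v. D\<psi> x \<bullet> v)) (at x)) \<and> continuous_on U D\<psi> \<and>
     (\<forall>x\<in>U. D\<psi> x \<noteq> 0) \<and> \<Omega> \<inter> U = {x\<in>U. \<psi> x < 0}"

definition C1_domain :: "(real^'n) set \<Rightarrow> bool" where
  "C1_domain \<Omega> \<longleftrightarrow> open \<Omega> \<and> connected \<Omega> \<and> \<Omega> \<noteq> {} \<and>
     (\<forall>p\<in>frontier \<Omega>. \<exists>U \<psi> D\<psi>. p \<in> U \<and> C1_defining \<Omega> U \<psi> D\<psi>)"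

text \<open>Outward g-unit normal at p from a local defining function: grad_g psi / |grad_g psi|_g.\<close>
definition outward_normal :: "(real \<Rightarrow> real) \<Rightarrow> (real^'n \<Rightarrow> real^'n) \<Rightarrow> real^'n \<Rightarrow> real^'n" where
  "outward_normal h D\<psi> p = (1 / sqrt (D\<psi> p \<bullet> ginv h p (D\<psi> p))) *\<^sub>R ginv h p (D\<psi> p)"

end

(* Put H(r) = integral of h over [0, r]. In normal coordinates \<Delta>H(r) = N h'(r), so v = u + H(r)
   is harmonic away from the pole. The pole is removable for the maximum principle thanks to a
   radial barrier F with \<Delta>F = 1 and F \<rightarrow> -\<infinity> at O, which exists because N \<ge> 2. On the
   boundary v = \<Phi>(r), where \<Phi> = \<phi> + H is nondecreasing because \<phi>' \<ge> -h.

   Let p1 and p2 be boundary points at the minimal and maximal distances R1 \<le> R2 from O. Then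
   B(R1) \<subseteq> \<Omega> \<subseteq> closed B(R2) (the second inclusion because the complement of a ball is
   connected when N \<ge> 2), and this forces the outward normals at p1 and p2 to be radial. Moreover
   v attains its minimum \<Phi>(R1) at p1 and its maximum \<Phi>(R2) at p2. Differentiating along the
   inward radial segments gives \<kappa>0 + h(R1) \<le> 0 \<le> \<kappa>0 + h(R2). This is impossible if R1 < R2,
   because h is strictly decreasing on [R1, R2]. Hence \<Omega> = B(R1), v is constant on the boundary
   and therefore everywhere, and u = v - H(r) is radial. *)

theory Submission
  imports Defs
begin

section \<open>Calculus in coordinates\<close>

definition vol_density :: "(real \<Rightarrow> real) \<Rightarrow> real^'n \<Rightarrow> real" where
  "vol_density h y = (h (norm y) / norm y) ^ (CARD('n) - 1)"

definition flux :: "(real \<Rightarrow> real) \<Rightarrow> (real^'n \<Rightarrow> real) \<Rightarrow> real^'n \<Rightarrow> real^'n" where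
  "flux h f y = vol_density h y *\<^sub>R ginv h y (egrad f y)"

definition twice_differentiable_on :: "(real^'n) set \<Rightarrow> (real^'n \<Rightarrow> real) \<Rightarrow> bool" where
  "twice_differentiable_on A f \<longleftrightarrow> (\<forall>y\<in>A. f differentiable (at y) \<and> egrad f differentiable (at y))"

lemma laplace_beltrami_flux: "laplace_beltrami h f x = ediv (flux h f) x / vol_density h x"
  unfolding laplace_beltrami_def Let_def flux_def vol_density_def by simp

lemma twice_differentiable_on_subset:
  "twice_differentiable_on A f \<Longrightarrow> B \<subseteq> A \<Longrightarrow> twice_differentiable_on B f"
  unfolding twice_differentiable_on_def by blast

lemma C2_on_imp_twice_differentiable_on: "C2_on A f \<Longrightarrow> twice_differentiable_on A f"
  unfolding C2_on_def twice_differentiable_on_def by blast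

lemma has_derivative_imp_egrad:
  fixes f :: "real^'n \<Rightarrow> real"
  assumes "(f has_derivative f') (at x)"
  shows "egrad f x = (\<chi> i. f' (axis i 1))" and "f' v = egrad f x \<bullet> v"
proof -
  show egrad: "egrad f x = (\<chi> i. f' (axis i 1))"
    unfolding egrad_def using frechet_derivative_at[OF assms] by simp
  have "f' v = f' (\<Sum>i\<in>UNIV. v $ i *\<^sub>R axis i 1)"
    using basis_expansion[of v] by (simp add: scalar_mult_eq_scaleR)
  also have "\<dots> = (\<Sum>i\<in>UNIV. v $ i * f' (axis i 1))"
    using has_derivative_linear[OF assms] by (simp add: linear_sum linear_scale)
  finally show "f' v = egrad f x \<bullet> v"
    by (simp add: egrad inner_vec_def mult.commute)
qed

lemma has_derivative_egrad:
  fixes f :: "real^'n \<Rightarrow> real"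
  assumes "f differentiable (at x)"
  shows "(f has_derivative (\<lambda>v. egrad f x \<bullet> v)) (at x)"
proof -
  have d: "(f has_derivative frechet_derivative f (at x)) (at x)"
    using assms frechet_derivative_works by blast
  with has_derivative_imp_egrad(2)[OF d] show ?thesis by presburger
qed

lemma egrad_lincomb:
  fixes f1 f2 :: "real^'n \<Rightarrow> real"
  assumes "f1 differentiable (at y)" "f2 differentiable (at y)"
  shows "egrad (\<lambda>x. a * f1 x + b * f2 x) y = a *\<^sub>R egrad f1 y + b *\<^sub>R egrad f2 y"
proof -
  have "((\<lambda>x. a * f1 x + b * f2 x) has_derivative
      (\<lambda>v. a * (egrad f1 y \<bullet> v) + b * (egrad f2 y \<bullet> v))) (at y)"
    using has_derivative_egrad[OF assms(1)] has_derivative_egrad[OF assms(2)]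
    by (intro derivative_intros) auto
  from has_derivative_imp_egrad(1)[OF this] show ?thesis
    by (simp add: vec_eq_iff inner_axis)
qed

lemma twice_differentiable_on_lincomb:
  fixes f1 f2 :: "real^'n \<Rightarrow> real"
  assumes "open A" "twice_differentiable_on A f1" "twice_differentiable_on A f2"
  shows "twice_differentiable_on A (\<lambda>x. a * f1 x + b * f2 x)"
  unfolding twice_differentiable_on_def
proof
  fix z assume z: "z \<in> A"
  have d: "f1 differentiable (at y)" "f2 differentiable (at y)" if "y \<in> A" for y
    using assms(2,3) that unfolding twice_differentiable_on_def by auto
  have "(\<lambda>y. a *\<^sub>R egrad f1 y + b *\<^sub>R egrad f2 y) differentiable (at z)"
    using assms(2,3) z unfolding twice_differentiable_on_def by (intro derivative_intros) auto
  then obtain Dg where Dg: "((\<lambda>y. a *\<^sub>R egrad f1 y + b *\<^sub>R egrad f2 y) has_derivative Dg) (at z)"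
    by (auto simp: differentiable_def)
  have "(egrad (\<lambda>x. a * f1 x + b * f2 x) has_derivative Dg) (at z)"
    by (rule has_derivative_transform_within_open[OF Dg assms(1) z]) (simp add: egrad_lincomb d)
  moreover have "(\<lambda>x. a * f1 x + b * f2 x) differentiable (at z)"
    using d z by (intro derivative_intros) auto
  ultimately show "(\<lambda>x. a * f1 x + b * f2 x) differentiable (at z) \<and>
      egrad (\<lambda>x. a * f1 x + b * f2 x) differentiable (at z)"
    by (auto simp: differentiable_def)
qed

lemma ginv_lincomb:
  "ginv h y (a *\<^sub>R w1 + b *\<^sub>R w2) = a *\<^sub>R ginv h y w1 + b *\<^sub>R ginv h y w2"
  unfolding ginv_def Let_def by (simp add: inner_add_right algebra_simps scaleR_add_right)

lemma ginv_nonzero: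
  "y \<noteq> 0 \<Longrightarrow> ginv h y w = (1 / (h (norm y) / norm y)^2) *\<^sub>R w +
     ((1 - 1 / (h (norm y) / norm y)^2) * ((y /\<^sub>R norm y) \<bullet> w)) *\<^sub>R (y /\<^sub>R norm y)"
  unfolding ginv_def Let_def by simp

lemma ginv_radial:
  assumes "y \<noteq> 0" "h (norm y) \<noteq> 0"
  shows "ginv h y (c *\<^sub>R y) = c *\<^sub>R y"
proof -
  define a where "a = 1 / (h (norm y) / norm y)^2"
  have "ginv h y (c *\<^sub>R y) =
      a *\<^sub>R (c *\<^sub>R y) + ((1 - a) * ((y /\<^sub>R norm y) \<bullet> (c *\<^sub>R y))) *\<^sub>R (y /\<^sub>R norm y)"
    using assms(1) by (simp add: ginv_nonzero a_def)
  also have "\<dots> = (a * c + (1 - a) * c) *\<^sub>R y"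
    using assms(1) by (simp add: dot_square_norm scaleR_left_distrib power2_eq_square)
  finally show ?thesis by (simp add: algebra_simps)
qed

lemma flux_eq_near:
  fixes z :: "real^'n"
  assumes "z \<noteq> 0" "y \<in> ball z (norm z)"
  shows "flux h f y = (h (norm y) / norm y) ^ (CARD('n) - 1) *\<^sub>R
    ((1 / (h (norm y) / norm y)^2) *\<^sub>R egrad f y +
     ((1 - 1 / (h (norm y) / norm y)^2) * ((y /\<^sub>R norm y) \<bullet> egrad f y)) *\<^sub>R (y /\<^sub>R norm y))"
proof -
  have "y \<noteq> 0" using assms by (auto simp: dist_norm)
  then show ?thesis by (simp add: flux_def vol_density_def ginv_nonzero)
qed

lemma flux_differentiable:
  fixes z :: "real^'n"
  assumes z: "z \<noteq> 0" and h: "h differentiable (at (norm z))" "h (norm z) \<noteq> 0"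
    and f: "egrad f differentiable (at z)"
  shows "flux h f differentiable (at z)"
proof -
  have "(\<lambda>y. h (norm y)) differentiable (at z)"
    by (rule differentiable_compose[of h norm]) (use h z in auto)
  then have "(\<lambda>y. (h (norm y) / norm y) ^ (CARD('n) - 1) *\<^sub>R
      ((1 / (h (norm y) / norm y)^2) *\<^sub>R egrad f y +
       ((1 - 1 / (h (norm y) / norm y)^2) * ((y /\<^sub>R norm y) \<bullet> egrad f y)) *\<^sub>R (y /\<^sub>R norm y)))
      differentiable (at z)" (is "?K differentiable _")
    using z h f by (intro derivative_intros differentiable_inner) auto
  moreover have "?K y = flux h f y" if "dist y z < norm z" for y
    using flux_eq_near[OF z, of y h f] that by (simp add: dist_commute)
  ultimately show ?thesis
    using differentiable_transform_within[of ?K z UNIV "norm z"] z by auto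
qed

lemma ediv_lincomb:
  fixes V V1 V2 :: "real^'n \<Rightarrow> real^'n"
  assumes "V1 differentiable (at z)" "V2 differentiable (at z)" "open A" "z \<in> A"
    and "\<And>y. y \<in> A \<Longrightarrow> V y = a *\<^sub>R V1 y + b *\<^sub>R V2 y"
  shows "ediv V z = a * ediv V1 z + b * ediv V2 z"
proof -
  have d: "((\<lambda>y. a *\<^sub>R V1 y + b *\<^sub>R V2 y) has_derivative
      (\<lambda>v. a *\<^sub>R frechet_derivative V1 (at z) v + b *\<^sub>R frechet_derivative V2 (at z) v)) (at z)"
    using assms(1,2) unfolding frechet_derivative_works by (intro derivative_intros) auto
  have "(V has_derivative
      (\<lambda>v. a *\<^sub>R frechet_derivative V1 (at z) v + b *\<^sub>R frechet_derivative V2 (at z) v)) (at z)"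
    by (rule has_derivative_transform_within_open[OF d assms(3,4)]) (simp add: assms(5))
  from frechet_derivative_at[OF this, symmetric] show ?thesis
    unfolding ediv_def by (simp add: sum.distrib sum_distrib_left)
qed

lemma laplace_beltrami_lincomb:
  fixes z :: "real^'n" and f1 f2 :: "real^'n \<Rightarrow> real"
  assumes z: "z \<noteq> 0" "open A" "z \<in> A"
    and f: "twice_differentiable_on A f1" "twice_differentiable_on A f2"
    and h: "h differentiable (at (norm z))" "h (norm z) \<noteq> 0"
  shows "laplace_beltrami h (\<lambda>x. a * f1 x + b * f2 x) z =
         a * laplace_beltrami h f1 z + b * laplace_beltrami h f2 z"
proof -
  have g: "egrad f1 differentiable (at z)" "egrad f2 differentiable (at z)"
    using f z unfolding twice_differentiable_on_def by auto
  have "ediv (flux h (\<lambda>x. a * f1 x + b * f2 x)) z = a * ediv (flux h f1) z + b * ediv (flux h f2) z"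
  proof (rule ediv_lincomb[OF flux_differentiable[OF z(1) h g(1)] flux_differentiable[OF z(1) h g(2)] z(2,3)])
    fix y assume "y \<in> A"
    then have "egrad (\<lambda>x. a * f1 x + b * f2 x) y = a *\<^sub>R egrad f1 y + b *\<^sub>R egrad f2 y"
      using egrad_lincomb f unfolding twice_differentiable_on_def by blast
    then show "flux h (\<lambda>x. a * f1 x + b * f2 x) y = a *\<^sub>R flux h f1 y + b *\<^sub>R flux h f2 y"
      by (simp add: flux_def ginv_lincomb scaleR_add_right mult.commute)
  qed
  then show ?thesis by (simp add: laplace_beltrami_flux add_divide_distrib)
qed

lemma trace_identities:
  fixes L :: "real^'n \<Rightarrow> real^'n" and e :: "real^'n"
  assumes L: "linear L" and e: "norm e = 1"
  shows "(\<Sum>i\<in>UNIV. (e \<bullet> L (axis i 1)) * e $ i) = e \<bullet> L e"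
    and "(\<Sum>i\<in>UNIV. (axis i 1 - e $ i *\<^sub>R e) \<bullet> L (axis i 1 - e $ i *\<^sub>R e)) =
         (\<Sum>i\<in>UNIV. L (axis i 1) $ i) - e \<bullet> L e"
proof -
  have e_expand: "(\<Sum>i\<in>UNIV. e $ i *\<^sub>R axis i 1) = e"
    using basis_expansion[of e] by (simp add: scalar_mult_eq_scaleR)
  have "(\<Sum>i\<in>UNIV. (e \<bullet> L (axis i 1)) * e $ i) = e \<bullet> L (\<Sum>i\<in>UNIV. e $ i *\<^sub>R axis i 1)"
    using L by (simp add: linear_sum linear_scale inner_sum_right mult.commute)
  then show right: "(\<Sum>i\<in>UNIV. (e \<bullet> L (axis i 1)) * e $ i) = e \<bullet> L e"
    by (simp only: e_expand)
  have "(\<Sum>i\<in>UNIV. e $ i * (axis i 1 \<bullet> L e)) = (\<Sum>i\<in>UNIV. e $ i *\<^sub>R axis i 1) \<bullet> L e"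
    by (simp add: inner_sum_left)
  then have left: "(\<Sum>i\<in>UNIV. e $ i * (axis i 1 \<bullet> L e)) = e \<bullet> L e"
    by (simp only: e_expand)
  have "(\<Sum>i\<in>UNIV. (e $ i)^2) = e \<bullet> e"
    by (simp add: inner_vec_def power2_eq_square)
  then have unit: "(\<Sum>i\<in>UNIV. (e $ i)^2) = 1"
    using e by (simp add: dot_square_norm)
  have "(axis i 1 - e $ i *\<^sub>R e) \<bullet> L (axis i 1 - e $ i *\<^sub>R e) =
     L (axis i 1) $ i - e $ i * (axis i 1 \<bullet> L e) - (e \<bullet> L (axis i 1)) * e $ i + (e $ i)^2 * (e \<bullet> L e)"
    for i
    using L by (simp add: linear_diff linear_scale inner_diff_left inner_diff_right inner_axis'
       algebra_simps power2_eq_square)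
  then show "(\<Sum>i\<in>UNIV. (axis i 1 - e $ i *\<^sub>R e) \<bullet> L (axis i 1 - e $ i *\<^sub>R e)) =
         (\<Sum>i\<in>UNIV. L (axis i 1) $ i) - e \<bullet> L e"
    by (simp add: sum.distrib sum_subtractf right left flip: sum_distrib_right) (simp add: unit)
qed

lemma egrad_zero_at_max:
  fixes W :: "real^'n \<Rightarrow> real"
  assumes "open A" "z \<in> A" "W differentiable (at z)" "\<And>y. y \<in> A \<Longrightarrow> W y \<le> W z"
  shows "egrad W z = 0"
proof -
  have "(\<lambda>v. egrad W z \<bullet> v) = (\<lambda>v. 0)"
    using differential_zero_maxmin[OF assms(2,1) has_derivative_egrad[OF assms(3)]] assms(4) by blast
  then show ?thesis by (metis inner_eq_zero_iff)
qed

lemma eventually_in_open_along_line: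
  fixes p d :: "'a::real_normed_vector"
  assumes "open U" "p \<in> U"
  shows "\<forall>\<^sub>F t in at_right 0. p + t *\<^sub>R d \<in> U"
proof -
  have "((\<lambda>t. p + t *\<^sub>R d) \<longlongrightarrow> p) (at_right 0)" by (auto intro!: tendsto_eq_intros)
  then show ?thesis using assms topological_tendstoD by blast
qed

lemma hessian_nonpos_at_max:
  fixes W :: "real^'n \<Rightarrow> real"
  assumes A: "open A" "z \<in> A" and W: "\<And>y. y \<in> A \<Longrightarrow> W differentiable (at y)"
    and Dg: "(egrad W has_derivative Dg) (at z)" and max: "\<And>y. y \<in> A \<Longrightarrow> W y \<le> W z"
  shows "v \<bullet> Dg v \<le> 0"
proof (rule ccontr)
  assume "\<not> v \<bullet> Dg v \<le> 0"
  then have pos: "0 < Dg v \<bullet> v" by (simp add: inner_commute)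
  define \<psi> where "\<psi> t = egrad W (z + t *\<^sub>R v) \<bullet> v" for t :: real
  have "((\<lambda>t::real. z + t *\<^sub>R v) has_derivative (\<lambda>t. t *\<^sub>R v)) (at 0)"
    by (auto intro!: derivative_eq_intros)
  then have "((\<lambda>t. egrad W (z + t *\<^sub>R v)) has_derivative (\<lambda>t. Dg (t *\<^sub>R v))) (at 0)"
    using has_derivative_compose[of "\<lambda>t::real. z + t *\<^sub>R v" "\<lambda>t. t *\<^sub>R v" 0 UNIV "egrad W" Dg] Dg
    by simp
  then have "(\<psi> has_derivative (\<lambda>t. Dg (t *\<^sub>R v) \<bullet> v)) (at 0)"
    unfolding \<psi>_def by (intro derivative_eq_intros) auto
  then have "(\<psi> has_derivative (\<lambda>t. (Dg v \<bullet> v) * t)) (at 0)"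
    using linear_scale[OF has_derivative_linear[OF Dg]] by (simp add: mult.commute)
  then have "(\<psi> has_real_derivative (Dg v \<bullet> v)) (at 0)"
    by (simp add: has_field_derivative_def)
  moreover have "\<psi> 0 = 0"
    using egrad_zero_at_max[OF A W[OF A(2)] max] by (simp add: \<psi>_def)
  ultimately have "\<forall>\<^sub>F t in at_right 0. 0 < \<psi> t"
    using DERIV_pos_inc_right[OF _ pos] unfolding eventually_at_right_field by force
  then have "\<forall>\<^sub>F t in at_right 0. 0 < \<psi> t \<and> z + t *\<^sub>R v \<in> A"
    using eventually_in_open_along_line[OF A] by (rule eventually_conj)
  then obtain b where b: "0 < b" "\<And>s. 0 < s \<Longrightarrow> s < b \<Longrightarrow> 0 < \<psi> s \<and> z + s *\<^sub>R v \<in> A"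
    unfolding eventually_at_right_field by blast
  define t where "t = b / 2"
  have "((\<lambda>s. W (z + s *\<^sub>R v)) has_real_derivative \<psi> s) (at s)" if "0 \<le> s" "s \<le> t" for s
  proof -
    have "z + s *\<^sub>R v \<in> A" using b A(2) that by (cases "s = 0") (auto simp: t_def)
    then have "(W has_derivative (\<lambda>w. egrad W (z + s *\<^sub>R v) \<bullet> w)) (at (z + s *\<^sub>R v))"
      using has_derivative_egrad W by blast
    moreover have "((\<lambda>s. z + s *\<^sub>R v) has_derivative (\<lambda>r. r *\<^sub>R v)) (at s)"
      by (auto intro!: derivative_eq_intros)
    ultimately have "((\<lambda>s. W (z + s *\<^sub>R v)) has_derivative (\<lambda>r. egrad W (z + s *\<^sub>R v) \<bullet> (r *\<^sub>R v))) (at s)"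
      using has_derivative_compose[of "\<lambda>s. z + s *\<^sub>R v" "\<lambda>r. r *\<^sub>R v" s UNIV W] by blast
    then show ?thesis
      by (rule has_derivative_imp_has_field_derivative) (simp add: \<psi>_def mult.commute)
  qed
  then obtain \<xi> where \<xi>: "0 < \<xi>" "\<xi> < t" "W (z + t *\<^sub>R v) - W (z + 0 *\<^sub>R v) = (t - 0) * \<psi> \<xi>"
    using MVT2[of 0 t "\<lambda>s. W (z + s *\<^sub>R v)" \<psi>] b by (auto simp: t_def)
  have "0 < t * \<psi> \<xi>" using b \<xi> by (simp add: t_def)
  moreover have "W (z + t *\<^sub>R v) \<le> W z" using max b by (simp add: t_def)
  ultimately show False using \<xi>(3) by simp
qed

lemma derivative_limit_nonpos_at_right_max:
  fixes f f' :: "real \<Rightarrow> real"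
  assumes d: "0 < d" and f: "continuous_on {0..d} f"
    and f': "\<And>s. 0 < s \<Longrightarrow> s < d \<Longrightarrow> (f has_real_derivative f' s) (at s)"
    and L: "(f' \<longlongrightarrow> L) (at_right 0)"
    and max: "\<And>s. 0 < s \<Longrightarrow> s < d \<Longrightarrow> f s \<le> f 0"
  shows "L \<le> 0"
proof (rule ccontr)
  assume "\<not> L \<le> 0"
  then have "\<forall>\<^sub>F s in at_right 0. 0 < f' s" using L by (simp add: order_tendstoD(1))
  then obtain b where b: "0 < b" "\<And>s. 0 < s \<Longrightarrow> s < b \<Longrightarrow> 0 < f' s"
    unfolding eventually_at_right_field by auto
  define t where "t = min b d / 2"
  have t: "0 < t" "t < b" "t < d" using b d by (auto simp: t_def)
  have "continuous_on {0..t} f" by (rule continuous_on_subset[OF f]) (use t in auto)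
  moreover have "f differentiable (at s)" if "0 < s" "s < t" for s
    using f'[of s] that t real_differentiable_def by force
  ultimately obtain l \<xi> where \<xi>: "0 < \<xi>" "\<xi> < t" "(f has_real_derivative l) (at \<xi>)"
    "f t - f 0 = (t - 0) * l"
    using MVT[OF t(1)] by blast
  then have "l = f' \<xi>" using f'[of \<xi>] t DERIV_unique by force
  then have "0 < t * l" using b(2)[of \<xi>] \<xi> t by simp
  then show False using max[of t] t \<xi>(4) by simp
qed

lemma laplace_beltrami_at_critical_point:
  fixes W :: "real^'n \<Rightarrow> real" and z :: "real^'n"
  assumes z: "z \<noteq> 0" and h: "h differentiable (at (norm z))" "0 < h (norm z)"
    and Dg: "(egrad W has_derivative Dg) (at z)" and crit: "egrad W z = 0"
  shows "laplace_beltrami h W z = (norm z / h (norm z))^2 * (\<Sum>i\<in>UNIV. Dg (axis i 1) $ i)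
    + (1 - (norm z / h (norm z))^2) * (sgn z \<bullet> Dg (sgn z))"
proof -
  define r where "r = (\<lambda>y::real^'n. h (norm y) / norm y)"
  define E where "E = (\<lambda>y::real^'n. y /\<^sub>R norm y)"
  define m where "m = CARD('n) - 1"
  have "(\<lambda>y. h (norm y)) differentiable (at z)"
    by (rule differentiable_compose[of h norm]) (use h z in auto)
  then have "r differentiable (at z)"
    using z unfolding r_def by (intro derivative_intros) auto
  then obtain Dr where Dr: "(r has_derivative Dr) (at z)" by (auto simp: differentiable_def)
  have "E differentiable (at z)" unfolding E_def using z by (auto intro!: derivative_intros)
  then obtain DE where DE: "(E has_derivative DE) (at z)" by (auto simp: differentiable_def)
  have rz: "r z > 0" using z h by (simp add: r_def)
  define K' where "K' = (\<lambda>v. (r z)^m *\<^sub>R ((1 / (r z)^2) *\<^sub>R Dg v +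
     ((1 - 1 / (r z)^2) * (E z \<bullet> Dg v)) *\<^sub>R E z))"
  have "((\<lambda>y. (r y)^m *\<^sub>R ((1 / (r y)^2) *\<^sub>R egrad W y +
      ((1 - 1 / (r y)^2) * (E y \<bullet> egrad W y)) *\<^sub>R E y)) has_derivative K') (at z)"
    unfolding K'_def using Dr DE Dg rz by (auto intro!: derivative_eq_intros simp: crit)
  then have "(flux h W has_derivative K') (at z)"
    by (rule has_derivative_transform_within_open[of _ _ _ UNIV "ball z (norm z)"])
      (use z flux_eq_near[OF z] in \<open>auto simp: r_def E_def m_def\<close>)
  then have fd: "frechet_derivative (flux h W) (at z) = K'" using frechet_derivative_at by metis
  define a where "a = 1 / (r z)^2"
  have "ediv (flux h W) z =
      (\<Sum>i\<in>UNIV. (r z)^m * (a * Dg (axis i 1) $ i + (1 - a) * ((E z \<bullet> Dg (axis i 1)) * E z $ i)))"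
    unfolding ediv_def fd K'_def a_def by (intro sum.cong) (auto simp: algebra_simps)
  also have "\<dots> = (r z)^m * (a * (\<Sum>i\<in>UNIV. Dg (axis i 1) $ i) + (1 - a) * (E z \<bullet> Dg (E z)))"
    using trace_identities(1)[OF has_derivative_linear[OF Dg], of "E z"] z
    by (simp add: E_def sum.distrib sum_distrib_left[symmetric] distrib_left)
  moreover have "vol_density h z = (r z)^m" by (simp add: vol_density_def r_def m_def)
  moreover have "a = (norm z / h (norm z))^2" "E z = sgn z"
    by (simp_all add: a_def r_def E_def sgn_div_norm power_divide)
  ultimately show ?thesis using rz by (simp add: laplace_beltrami_flux)
qed

text \<open>At a maximum the Hessian \<open>Q\<close> is negative semidefinite. With \<open>e = sgn z\<close> the value at a
  critical point reads \<open>a (tr Q - e \<bullet> Q e) + e \<bullet> Q e\<close>, and \<open>tr Q - e \<bullet> Q e\<close> is the sum of the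
  values of \<open>Q\<close> on the vectors \<open>axis i 1 - e $ i *\<^sub>R e\<close>.\<close>
lemma laplace_beltrami_nonpos_at_max:
  fixes W :: "real^'n \<Rightarrow> real" and z :: "real^'n"
  assumes z: "z \<noteq> 0" "open A" "z \<in> A" and W: "twice_differentiable_on A W"
    and max: "\<And>y. y \<in> A \<Longrightarrow> W y \<le> W z"
    and h: "h differentiable (at (norm z))" "h (norm z) > 0"
  shows "laplace_beltrami h W z \<le> 0"
proof -
  have Wd: "\<And>y. y \<in> A \<Longrightarrow> W differentiable (at y)"
    using W unfolding twice_differentiable_on_def by blast
  obtain Dg where Dg: "(egrad W has_derivative Dg) (at z)"
    using W z unfolding twice_differentiable_on_def differentiable_def by blast
  have Q: "v \<bullet> Dg v \<le> 0" for v
    using hessian_nonpos_at_max[OF z(2,3) Wd Dg max] .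
  define a where "a = (norm z / h (norm z))^2"
  define e where "e = sgn z"
  have e: "norm e = 1" using z by (simp add: e_def norm_sgn)
  have "laplace_beltrami h W z = a * (\<Sum>i\<in>UNIV. Dg (axis i 1) $ i) + (1 - a) * (e \<bullet> Dg e)"
    unfolding a_def e_def
    by (rule laplace_beltrami_at_critical_point[OF z(1) h Dg egrad_zero_at_max[OF z(2,3) Wd[OF z(3)] max]])
  also have "\<dots> = a * ((\<Sum>i\<in>UNIV. Dg (axis i 1) $ i) - e \<bullet> Dg e) + e \<bullet> Dg e"
    by (simp add: algebra_simps)
  also have "(\<Sum>i\<in>UNIV. Dg (axis i 1) $ i) - e \<bullet> Dg e =
      (\<Sum>i\<in>UNIV. (axis i 1 - e $ i *\<^sub>R e) \<bullet> Dg (axis i 1 - e $ i *\<^sub>R e))"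
    using trace_identities(2)[OF has_derivative_linear[OF Dg] e] by simp
  also have "a * \<dots> + e \<bullet> Dg e \<le> 0"
    using Q by (intro add_nonpos_nonpos mult_nonneg_nonpos sum_nonpos) (auto simp: a_def)
  finally show ?thesis .
qed

section \<open>Radial functions\<close>

lemma has_derivative_radial:
  fixes y :: "real^'n"
  assumes "y \<noteq> 0" "(f has_real_derivative d) (at (norm y))"
  shows "((\<lambda>x. f (norm x)) has_derivative (\<lambda>v. d * (v \<bullet> sgn y))) (at y)"
proof -
  have "(f has_derivative (\<lambda>t. t * d)) (at (norm y))"
    using assms(2) by (simp add: has_field_derivative_def mult.commute[of _ d])
  then have "((\<lambda>x. f (norm x)) has_derivative (\<lambda>v. (v \<bullet> sgn y) * d)) (at y)"
    using has_derivative_compose[OF has_derivative_norm[OF assms(1)]] by blast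
  then show ?thesis by (simp add: mult.commute)
qed

lemma egrad_radial:
  fixes y :: "real^'n"
  assumes "y \<noteq> 0" "(f has_real_derivative d) (at (norm y))"
  shows "egrad (\<lambda>x. f (norm x)) y = (d / norm y) *\<^sub>R y"
  using has_derivative_imp_egrad(1)[OF has_derivative_radial[OF assms]] assms(1)
  by (simp add: vec_eq_iff inner_axis' sgn_div_norm field_simps)

lemma ediv_radial:
  fixes z :: "real^'n" and V :: "real^'n \<Rightarrow> real^'n"
  assumes z: "z \<noteq> 0" "open A" "z \<in> A"
    and V: "\<And>y. y \<in> A \<Longrightarrow> V y = \<psi> (norm y) *\<^sub>R y"
    and \<psi>: "(\<psi> has_real_derivative \<psi>') (at (norm z))"
  shows "ediv V z = norm z * \<psi>' + real CARD('n) * \<psi> (norm z)"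
proof -
  have "((\<lambda>y. \<psi> (norm y) *\<^sub>R y) has_derivative
      (\<lambda>v. \<psi> (norm z) *\<^sub>R v + (\<psi>' * (v \<bullet> sgn z)) *\<^sub>R z)) (at z)"
    using has_derivative_radial[OF z(1) \<psi>] by (auto intro!: derivative_eq_intros)
  then have "(V has_derivative (\<lambda>v. \<psi> (norm z) *\<^sub>R v + (\<psi>' * (v \<bullet> sgn z)) *\<^sub>R z)) (at z)"
    by (rule has_derivative_transform_within_open[OF _ z(2,3)]) (simp add: V)
  from frechet_derivative_at[OF this, symmetric]
  have "ediv V z = (\<Sum>i\<in>UNIV. \<psi> (norm z) + \<psi>' * (sgn z $ i * z $ i))"
    unfolding ediv_def by (simp add: inner_axis' mult.assoc)
  also have "\<dots> = real CARD('n) * \<psi> (norm z) + \<psi>' * (sgn z \<bullet> z)"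
    by (simp add: sum.distrib sum_distrib_left inner_vec_def)
  also have "sgn z \<bullet> z = norm z"
    using z by (simp add: sgn_div_norm dot_square_norm power2_eq_square)
  finally show ?thesis by simp
qed

lemma laplace_beltrami_radial:
  fixes z :: "real^'n"
  assumes z: "z \<noteq> 0" "open A" "z \<in> A" "0 \<notin> A"
    and h: "\<And>y. y \<in> A \<Longrightarrow> h (norm y) \<noteq> 0"
    and f: "\<And>y. y \<in> A \<Longrightarrow> (f has_real_derivative f' (norm y)) (at (norm y))"
    and \<psi>_eq: "\<And>y. y \<in> A \<Longrightarrow> \<psi> (norm y) = vol_density h y * f' (norm y) / norm y"
    and \<psi>: "(\<psi> has_real_derivative \<psi>') (at (norm z))"
  shows "laplace_beltrami h (\<lambda>x. f (norm x)) z =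
    (norm z * \<psi>' + real CARD('n) * \<psi> (norm z)) / vol_density h z"
proof -
  have "ediv (flux h (\<lambda>x. f (norm x))) z = norm z * \<psi>' + real CARD('n) * \<psi> (norm z)"
  proof (rule ediv_radial[OF z(1-3) _ \<psi>])
    fix y assume y: "y \<in> A"
    then have "y \<noteq> 0" using z(4) by auto
    then show "flux h (\<lambda>x. f (norm x)) y = \<psi> (norm y) *\<^sub>R y"
      using egrad_radial[OF _ f[OF y]] ginv_radial[of y h "f' (norm y) / norm y"] h[OF y] \<psi>_eq[OF y]
      by (simp add: flux_def)
  qed
  then show ?thesis by (simp add: laplace_beltrami_flux)
qed

lemma twice_differentiable_on_radial:
  assumes f: "\<And>r. 0 < r \<Longrightarrow> r < T \<Longrightarrow> (f has_real_derivative f' r) (at r)"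
    and f': "\<And>r. 0 < r \<Longrightarrow> r < T \<Longrightarrow> f' differentiable (at r)"
  shows "twice_differentiable_on (ball 0 T - {0}) (\<lambda>x::real^'n. f (norm x))"
  unfolding twice_differentiable_on_def
proof
  fix z :: "real^'n" assume z: "z \<in> ball 0 T - {0}"
  then have z0: "z \<noteq> 0" "0 < norm z" "norm z < T" by auto
  have "((\<lambda>x. f (norm x)) has_derivative (\<lambda>v. f' (norm z) * (v \<bullet> sgn z))) (at z)"
    using has_derivative_radial[OF z0(1) f[OF z0(2,3)]] .
  then have "(\<lambda>x. f (norm x)) differentiable (at z)" by (auto simp: differentiable_def)
  moreover have "(\<lambda>y. f' (norm y)) differentiable (at z)"
    by (rule differentiable_compose[of f' norm]) (use f' z0 in auto)
  then have "(\<lambda>y. (f' (norm y) / norm y) *\<^sub>R y) differentiable (at z)"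
    using z0 by (intro derivative_intros) auto
  then obtain D where D: "((\<lambda>y. (f' (norm y) / norm y) *\<^sub>R y) has_derivative D) (at z)"
    by (auto simp: differentiable_def)
  have "(egrad (\<lambda>x. f (norm x)) has_derivative D) (at z)"
  proof (rule has_derivative_transform_within_open[OF D _ z])
    show "open (ball (0::real^'n) T - {0})" by auto
    fix y :: "real^'n" assume "y \<in> ball 0 T - {0}"
    then show "(f' (norm y) / norm y) *\<^sub>R y = egrad (\<lambda>x. f (norm x)) y"
      using egrad_radial[of y f "f' (norm y)"] f by simp
  qed
  ultimately show "(\<lambda>x. f (norm x)) differentiable (at z) \<and> egrad (\<lambda>x. f (norm x)) differentiable (at z)"
    by (auto simp: differentiable_def)
qed

lemma norm_diff_scaleR_sgn:
  fixes p :: "'a::real_normed_vector"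
  assumes "0 \<le> t" "t \<le> norm p"
  shows "norm (p - t *\<^sub>R sgn p) = norm p - t"
proof (cases "p = 0")
  case False
  then have "p - t *\<^sub>R sgn p = (1 - t / norm p) *\<^sub>R p"
    by (simp add: sgn_div_norm scaleR_diff_left divide_inverse)
  then have "norm (p - t *\<^sub>R sgn p) = \<bar>1 - t / norm p\<bar> * norm p" by simp
  also have "\<dots> = norm p - t" using assms False by (simp add: abs_of_nonneg field_simps)
  finally show ?thesis .
qed (use assms in simp)

lemma card_eq_Suc: "CARD('n::finite) = Suc (CARD('n) - 1)"
  using zero_less_card_finite[where 'a='n] by simp

section \<open>Boundary points at extremal distance from the pole\<close>

lemma ball_subset_if_frontier_outside:
  fixes \<Omega> :: "'a::real_normed_vector set"
  assumes "a \<in> \<Omega>" "\<And>y. y \<in> frontier \<Omega> \<Longrightarrow> \<rho> \<le> dist a y"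
  shows "ball a \<rho> \<subseteq> \<Omega>"
proof (cases "0 < \<rho>")
  case True
  show ?thesis
  proof (rule ccontr)
    assume "\<not> ball a \<rho> \<subseteq> \<Omega>"
    moreover have "a \<in> ball a \<rho> \<inter> \<Omega>" using assms(1) True by simp
    ultimately have "ball a \<rho> \<inter> frontier \<Omega> \<noteq> {}"
      using connected_Int_frontier[OF connected_ball, of a \<rho> \<Omega>] by blast
    then show False using assms(2) by fastforce
  qed
qed (simp add: ball_empty)

lemma subset_cball_if_frontier_inside:
  fixes \<Omega> :: "'a::euclidean_space set"
  assumes dim: "2 \<le> DIM('a)" and "bounded \<Omega>" "\<And>y. y \<in> frontier \<Omega> \<Longrightarrow> norm y \<le> \<rho>"
  shows "\<Omega> \<subseteq> cball 0 \<rho>"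
proof (rule ccontr)
  assume "\<not> \<Omega> \<subseteq> cball 0 \<rho>"
  then have "- cball 0 \<rho> \<inter> \<Omega> \<noteq> {}" by blast
  moreover have "- cball 0 \<rho> - \<Omega> \<noteq> {}"
  proof -
    obtain B where B: "\<And>x. x \<in> \<Omega> \<Longrightarrow> norm x \<le> B" using assms(2) by (auto simp: bounded_iff)
    obtain y :: 'a where "norm y = \<bar>B\<bar> + \<bar>\<rho>\<bar> + 1"
      using vector_choose_size[of "\<bar>B\<bar> + \<bar>\<rho>\<bar> + 1"] by auto
    then have "y \<in> - cball 0 \<rho> - \<Omega>" using B[of y] by auto
    then show ?thesis by blast
  qed
  moreover have "connected (- cball (0::'a) \<rho>)"
    using dim by (intro connected_complement_bounded_convex) auto
  ultimately have "- cball 0 \<rho> \<inter> frontier \<Omega> \<noteq> {}"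
    using connected_Int_frontier by blast
  then show False using assms(3) by force
qed

lemma eventually_norm_along_line:
  fixes p d :: "real^'n"
  shows "d \<bullet> p < 0 \<Longrightarrow> \<forall>\<^sub>F t in at_right 0. norm (p + t *\<^sub>R d) < norm p"
    and "0 < d \<bullet> p \<Longrightarrow> \<forall>\<^sub>F t in at_right 0. norm p < norm (p + t *\<^sub>R d)"
proof -
  have "(\<lambda>t. (p + t *\<^sub>R d) \<bullet> (p + t *\<^sub>R d)) = (\<lambda>t. p \<bullet> p + t * (2 * (d \<bullet> p)) + t^2 * (d \<bullet> d))"
    by (auto simp: algebra_simps inner_add_left inner_add_right inner_commute power2_eq_square)
  moreover have "((\<lambda>t. p \<bullet> p + t * (2 * (d \<bullet> p)) + t^2 * (d \<bullet> d)) has_real_derivative 2 * (d \<bullet> p)) (at 0)"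
    by (auto intro!: derivative_eq_intros)
  ultimately have "((\<lambda>t. (p + t *\<^sub>R d) \<bullet> (p + t *\<^sub>R d)) has_real_derivative 2 * (d \<bullet> p)) (at 0)"
    by simp
  note DERIV_neg_dec_right[OF this] DERIV_pos_inc_right[OF this]
  then show "d \<bullet> p < 0 \<Longrightarrow> \<forall>\<^sub>F t in at_right 0. norm (p + t *\<^sub>R d) < norm p"
    and "0 < d \<bullet> p \<Longrightarrow> \<forall>\<^sub>F t in at_right 0. norm p < norm (p + t *\<^sub>R d)"
    unfolding eventually_at_right_field norm_lt by simp_all
qed

lemma has_real_derivative_along_line:
  fixes \<psi> :: "real^'n \<Rightarrow> real"
  assumes "(\<psi> has_derivative (\<lambda>v. Dp \<bullet> v)) (at (p + t *\<^sub>R v))"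
  shows "((\<lambda>t. \<psi> (p + t *\<^sub>R v)) has_real_derivative Dp \<bullet> v) (at t)"
proof -
  have "((\<lambda>t::real. p + t *\<^sub>R v) has_derivative (\<lambda>t. t *\<^sub>R v)) (at t)"
    by (auto intro!: derivative_eq_intros)
  then have "((\<lambda>t. \<psi> (p + t *\<^sub>R v)) has_derivative (\<lambda>t. Dp \<bullet> (t *\<^sub>R v))) (at t)"
    using assms by (rule has_derivative_compose)
  then show ?thesis
    by (rule has_derivative_imp_has_field_derivative) (simp add: mult.commute)
qed
lemma directional_derivative_nonpos_at_max:
  fixes \<psi> :: "real^'n \<Rightarrow> real"
  assumes "(\<psi> has_derivative (\<lambda>v. Dp \<bullet> v)) (at p)"
    and "\<forall>\<^sub>F t in at_right 0. \<psi> (p + t *\<^sub>R v) \<le> \<psi> p"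
  shows "Dp \<bullet> v \<le> 0"
proof (rule ccontr)
  assume "\<not> Dp \<bullet> v \<le> 0"
  then have pos: "0 < Dp \<bullet> v" by simp
  have "((\<lambda>t. \<psi> (p + t *\<^sub>R v)) has_real_derivative Dp \<bullet> v) (at 0)"
    by (rule has_real_derivative_along_line) (simp add: assms(1))
  from DERIV_pos_inc_right[OF this pos]
  have "\<forall>\<^sub>F t in at_right 0. \<psi> p < \<psi> (p + t *\<^sub>R v)"
    unfolding eventually_at_right_field by simp
  then have "\<forall>\<^sub>F t in at_right (0::real). False"
    using assms(2) by eventually_elim simp
  then show False by (simp add: trivial_limit_at_right_real)
qed

lemma nonneg_multiple_if_cone_condition:
  fixes w e :: "real^'n"
  assumes e: "norm e = 1" and cone: "\<And>d. d \<bullet> e < 0 \<Longrightarrow> w \<bullet> d \<le> 0"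
  shows "w = (w \<bullet> e) *\<^sub>R e" "0 \<le> w \<bullet> e"
proof -
  have ee: "e \<bullet> e = 1" using e by (simp add: dot_square_norm)
  show nonneg: "0 \<le> w \<bullet> e" using cone[of "- e"] ee by simp
  define v where "v = w - (w \<bullet> e) *\<^sub>R e"
  have ve: "v \<bullet> e = 0" using ee by (simp add: v_def inner_diff_left)
  have wv: "w \<bullet> v = v \<bullet> v" using ve by (simp add: v_def inner_diff_left inner_diff_right inner_commute)
  have "v \<bullet> v \<le> 0 + \<epsilon>" if "0 < \<epsilon>" for \<epsilon>
  proof -
    define t where "t = \<epsilon> / (w \<bullet> e + 1)"
    have t: "0 < t" "t * (w \<bullet> e) \<le> \<epsilon>"
      using that nonneg by (auto simp: t_def field_simps)
    have "(v - t *\<^sub>R e) \<bullet> e < 0" using ve ee t by (simp add: inner_diff_left)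
    then have "w \<bullet> (v - t *\<^sub>R e) \<le> 0" by (rule cone)
    then show ?thesis using wv t by (simp add: inner_diff_right)
  qed
  then have "v \<bullet> v \<le> 0" by (rule field_le_epsilon)
  then have "v = 0" using inner_ge_zero[of v] by (simp add: order_antisym)
  then show "w = (w \<bullet> e) *\<^sub>R e" by (simp add: v_def)
qed

lemma outward_normal_radial_if_cone_condition:
  fixes p :: "real^'n"
  assumes C: "C1_defining \<Omega> U \<psi> D\<psi>" "p \<in> U" and p: "p \<noteq> 0" "h (norm p) \<noteq> 0"
    and cone: "\<And>d. d \<bullet> p < 0 \<Longrightarrow> D\<psi> p \<bullet> d \<le> 0"
  shows "outward_normal h D\<psi> p = sgn p" "0 < D\<psi> p \<bullet> sgn p"
proof -
  define l where "l = D\<psi> p \<bullet> sgn p"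
  have "D\<psi> p \<bullet> d \<le> 0" if "d \<bullet> sgn p < 0" for d
  proof (rule cone)
    have "d \<bullet> p = norm p * (d \<bullet> sgn p)" using p by (simp add: sgn_div_norm)
    then show "d \<bullet> p < 0" using that p by (simp add: mult_pos_neg)
  qed
  then have par: "D\<psi> p = l *\<^sub>R sgn p" and "0 \<le> l"
    using nonneg_multiple_if_cone_condition[of "sgn p" "D\<psi> p"] p by (auto simp: l_def norm_sgn)
  moreover have "D\<psi> p \<noteq> 0" using C unfolding C1_defining_def by blast
  ultimately show l: "0 < D\<psi> p \<bullet> sgn p" unfolding l_def[symmetric] by fastforce
  have g: "ginv h p (D\<psi> p) = l *\<^sub>R sgn p"
    using par ginv_radial[of p h "l / norm p"] p by (simp add: sgn_div_norm divide_inverse)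
  have "sgn p \<bullet> sgn p = 1" using p by (simp add: dot_square_norm norm_sgn)
  then have "D\<psi> p \<bullet> ginv h p (D\<psi> p) = l^2"
    using par g by (simp add: power2_eq_square)
  then show "outward_normal h D\<psi> p = sgn p"
    unfolding outward_normal_def using g l by (simp add: l_def)
qed

lemma C1_defining_nonneg_outside:
  "C1_defining \<Omega> U \<psi> D\<psi> \<Longrightarrow> p \<in> U \<Longrightarrow> p \<notin> \<Omega> \<Longrightarrow> 0 \<le> \<psi> p"
  unfolding C1_defining_def by (metis (mono_tags, lifting) Int_iff mem_Collect_eq not_le)

lemma C1_defining_nonpos_closure:
  assumes C: "C1_defining \<Omega> U \<psi> D\<psi>" and p: "p \<in> U" "p \<in> closure \<Omega>"
  shows "\<psi> p \<le> 0"
proof (rule ccontr)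
  assume "\<not> \<psi> p \<le> 0"
  moreover have "isCont \<psi> p"
    using C p has_derivative_continuous unfolding C1_defining_def by blast
  ultimately obtain d where d: "0 < d" "\<And>y. dist y p < d \<Longrightarrow> dist (\<psi> y) (\<psi> p) < \<psi> p"
    unfolding continuous_at_eps_delta by (metis not_le)
  obtain e where e: "0 < e" "ball p e \<subseteq> U" using C p unfolding C1_defining_def by (meson openE)
  obtain y where y: "y \<in> \<Omega>" "dist y p < min d e"
    using p(2) d e unfolding closure_approachable by (metis min_less_iff_conj)
  then have "y \<in> U" using e by (auto simp: dist_commute)
  then have "\<psi> y < 0" using y C unfolding C1_defining_def by blast
  moreover have "dist (\<psi> y) (\<psi> p) < \<psi> p" using d y by simp
  ultimately show False by (simp add: dist_real_def)
qed

lemma outward_normal_at_nearest_boundary_point: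
  fixes p :: "real^'n"
  assumes C: "C1_defining \<Omega> U \<psi> D\<psi>" "p \<in> U" and p: "p \<notin> \<Omega>" "p \<noteq> 0" "h (norm p) \<noteq> 0"
    and ball: "ball 0 (norm p) \<subseteq> \<Omega>"
  shows "outward_normal h D\<psi> p = sgn p"
proof (rule outward_normal_radial_if_cone_condition(1)[where h=h, OF C p(2,3)])
  fix d assume "d \<bullet> p < 0"
  have U: "open U" and D\<psi>: "(\<psi> has_derivative (\<lambda>v. D\<psi> p \<bullet> v)) (at p)"
    using C unfolding C1_defining_def by auto
  have "\<forall>\<^sub>F t in at_right 0. \<psi> (p + t *\<^sub>R d) \<le> \<psi> p"
    using eventually_norm_along_line(1)[OF \<open>d \<bullet> p < 0\<close>] eventually_in_open_along_line[OF U C(2), of d]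
  proof eventually_elim
    case (elim t)
    then have "\<psi> (p + t *\<^sub>R d) < 0" using ball C(1) unfolding C1_defining_def by auto
    then show ?case using C1_defining_nonneg_outside[OF C p(1)] by simp
  qed
  with D\<psi> show "D\<psi> p \<bullet> d \<le> 0" by (rule directional_derivative_nonpos_at_max)
qed

lemma C1_defining_zero_at_frontier:
  assumes "C1_defining \<Omega> U \<psi> D\<psi>" "p \<in> U" "open \<Omega>" "p \<in> frontier \<Omega>"
  shows "\<psi> p = 0"
proof -
  have "p \<in> closure \<Omega>" "p \<notin> \<Omega>" using assms(3,4) by (auto simp: frontier_def interior_open)
  then show ?thesis
    using C1_defining_nonneg_outside[OF assms(1,2)] C1_defining_nonpos_closure[OF assms(1,2)] by force
qed

lemma cone_condition_at_farthest_point: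
  fixes p :: "real^'n"
  assumes C: "C1_defining \<Omega> U \<psi> D\<psi>" "p \<in> U" and "\<psi> p = 0"
    and cball: "\<Omega> \<subseteq> cball 0 (norm p)" and "d \<bullet> p < 0"
  shows "D\<psi> p \<bullet> d \<le> 0"
proof -
  have U: "open U" and "(\<psi> has_derivative (\<lambda>v. D\<psi> p \<bullet> v)) (at p)"
    using C unfolding C1_defining_def by auto
  then have "((\<lambda>x. - \<psi> x) has_derivative (\<lambda>v. (- D\<psi> p) \<bullet> v)) (at p)"
    by (auto intro!: derivative_eq_intros)
  moreover have dp: "0 < (- d) \<bullet> p" using assms(5) by simp
  have "\<forall>\<^sub>F t in at_right 0. - \<psi> (p + t *\<^sub>R - d) \<le> - \<psi> p"
    using eventually_norm_along_line(2)[OF dp] eventually_in_open_along_line[OF U C(2), of "- d"]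
  proof eventually_elim
    case (elim t)
    then have "p + t *\<^sub>R - d \<notin> \<Omega>" using cball by auto
    then show ?case using C1_defining_nonneg_outside[OF C(1) elim(2)] \<open>\<psi> p = 0\<close> by simp
  qed
  ultimately have "(- D\<psi> p) \<bullet> (- d) \<le> 0" by (rule directional_derivative_nonpos_at_max)
  then show ?thesis by simp
qed

lemma outward_normal_at_farthest_boundary_point:
  fixes p :: "real^'n"
  assumes C: "C1_defining \<Omega> U \<psi> D\<psi>" "p \<in> U"
    and p: "p \<in> frontier \<Omega>" "p \<noteq> 0" "h (norm p) \<noteq> 0" and "open \<Omega>"
    and cball: "\<Omega> \<subseteq> cball 0 (norm p)"
  shows "outward_normal h D\<psi> p = sgn p"
    and "\<exists>\<delta>>0. \<forall>t. 0 < t \<and> t < \<delta> \<longrightarrow> p - t *\<^sub>R sgn p \<in> \<Omega>"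
proof -
  have U: "open U" and D\<psi>: "(\<psi> has_derivative (\<lambda>v. D\<psi> p \<bullet> v)) (at p)"
    using C unfolding C1_defining_def by auto
  have \<psi>p: "\<psi> p = 0" using C1_defining_zero_at_frontier[OF C \<open>open \<Omega>\<close> p(1)] .
  note cone = cone_condition_at_farthest_point[OF C \<psi>p cball]
  show "outward_normal h D\<psi> p = sgn p"
    by (rule outward_normal_radial_if_cone_condition(1)[where h=h, OF C p(2,3)]) (rule cone)
  have "0 < D\<psi> p \<bullet> sgn p"
    by (rule outward_normal_radial_if_cone_condition(2)[where h=h, OF C p(2,3)]) (rule cone)
  then have neg: "D\<psi> p \<bullet> (- sgn p) < 0" by simp
  have "((\<lambda>t. \<psi> (p + t *\<^sub>R - sgn p)) has_real_derivative D\<psi> p \<bullet> (- sgn p)) (at 0)"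
    by (rule has_real_derivative_along_line) (simp add: D\<psi>)
  from DERIV_neg_dec_right[OF this neg]
  have "\<forall>\<^sub>F t in at_right 0. \<psi> (p + t *\<^sub>R - sgn p) < \<psi> p"
    unfolding eventually_at_right_field by simp
  then have "\<forall>\<^sub>F t in at_right 0. p - t *\<^sub>R sgn p \<in> \<Omega>"
    using eventually_in_open_along_line[OF U C(2), of "- sgn p"]
  proof eventually_elim
    case (elim t)
    then show ?case using C(1) \<psi>p unfolding C1_defining_def by auto
  qed
  then show "\<exists>\<delta>>0. \<forall>t. 0 < t \<and> t < \<delta> \<longrightarrow> p - t *\<^sub>R sgn p \<in> \<Omega>"
    unfolding eventually_at_right_field by auto
qed

lemma frontier_extremal_points:
  fixes \<Omega> :: "(real^'n) set"
  assumes dim: "2 \<le> CARD('n)" and \<Omega>: "bounded \<Omega>" "open \<Omega>" "0 \<in> \<Omega>"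
  obtains p1 p2 where "p1 \<in> frontier \<Omega>" "p2 \<in> frontier \<Omega>"
    "\<And>y. y \<in> frontier \<Omega> \<Longrightarrow> norm p1 \<le> norm y \<and> norm y \<le> norm p2"
    "0 < norm p1" "ball 0 (norm p1) \<subseteq> \<Omega>" "\<Omega> \<subseteq> cball 0 (norm p2)"
    "Inf (norm ` frontier \<Omega>) = norm p1" "Sup (norm ` frontier \<Omega>) = norm p2"
proof -
  have "frontier \<Omega> \<noteq> {}" using \<Omega> by (auto simp: frontier_eq_empty)
  moreover have "compact (frontier \<Omega>)" using \<Omega>(1) by (rule compact_frontier_bounded)
  ultimately obtain p1 p2 where p: "p1 \<in> frontier \<Omega>" "p2 \<in> frontier \<Omega>"
    "\<And>y. y \<in> frontier \<Omega> \<Longrightarrow> norm p1 \<le> norm y \<and> norm y \<le> norm p2"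
    using continuous_attains_inf[of _ norm] continuous_attains_sup[of _ norm]
    by (metis continuous_on_norm_id)
  moreover have "0 < norm p1" using p(1) \<Omega>(2,3) by (auto simp: frontier_def interior_open)
  moreover have "ball 0 (norm p1) \<subseteq> \<Omega>"
    using p(3) \<Omega>(3) by (intro ball_subset_if_frontier_outside) auto
  moreover have "\<Omega> \<subseteq> cball 0 (norm p2)"
    using p(3) dim \<Omega>(1) by (intro subset_cball_if_frontier_inside) auto
  moreover have "Inf (norm ` frontier \<Omega>) = norm p1" "Sup (norm ` frontier \<Omega>) = norm p2"
    using p by (intro cInf_eq_minimum cSup_eq_maximum; force)+
  ultimately show ?thesis using that by blast
qed

lemma continuous_attains_sup_off_pole:
  fixes W :: "'a::real_normed_vector \<Rightarrow> real"
  assumes K: "compact K" and W: "continuous_on (K - {0}) W" and x: "x \<in> K - {0}"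
    and d: "0 < d" and near_pole: "\<And>y. y \<in> K - {0} \<Longrightarrow> norm y < d \<Longrightarrow> W y < W x"
  obtains z where "z \<in> K" "d \<le> norm z" "\<And>y. y \<in> K - {0} \<Longrightarrow> W y \<le> W z"
proof -
  define K' where "K' = K \<inter> {y. d \<le> norm y}"
  have "d \<le> norm x" using near_pole[OF x] by (metis less_irrefl not_le)
  then have xK': "x \<in> K'" using x by (simp add: K'_def)
  have "compact K'"
    unfolding K'_def using K by (intro compact_Int_closed closed_Collect_le continuous_intros)
  moreover have "continuous_on K' W"
    by (rule continuous_on_subset[OF W]) (use d in \<open>auto simp: K'_def\<close>)
  ultimately obtain z where z: "z \<in> K'" "\<And>y. y \<in> K' \<Longrightarrow> W y \<le> W z"
    using continuous_attains_sup[of K' W] xK' by blast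
  have "W y \<le> W z" if y: "y \<in> K - {0}" for y
  proof (cases "d \<le> norm y")
    case True then show ?thesis using z(2) y by (simp add: K'_def)
  next
    case False then show ?thesis using near_pole[OF y] z(2)[OF xK'] by simp
  qed
  moreover have "z \<in> K" "d \<le> norm z" using z(1) by (simp_all add: K'_def)
  ultimately show ?thesis using that by blast
qed

section \<open>Radial profiles and the maximum principle\<close>

definition radial_primitive :: "(real \<Rightarrow> real) \<Rightarrow> real \<Rightarrow> real" where
  "radial_primitive h r = integral {0..r} h"

definition barrier_slope :: "(real \<Rightarrow> real) \<Rightarrow> nat \<Rightarrow> real \<Rightarrow> real" where
  "barrier_slope h m r = (1 + integral {0..r} (\<lambda>t. h t ^ m)) / h r ^ m"

text \<open>The radial solution of \<open>\<Delta>F = 1\<close> with \<open>F T = 0\<close> and flux \<open>h^m F' \<rightarrow> 1\<close> at the pole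
  (\<open>m = N - 1\<close>); the unit flux makes it tend to \<open>-\<infinity>\<close> there.\<close>
definition barrier :: "(real \<Rightarrow> real) \<Rightarrow> nat \<Rightarrow> real \<Rightarrow> real \<Rightarrow> real" where
  "barrier h m T r = - integral {r..T} (barrier_slope h m)"

locale radial_profile =
  fixes h :: "real \<Rightarrow> real" and T :: real
  assumes T_pos: "0 < T"
    and h_continuous: "continuous_on {0..T} h"
    and h_differentiable: "\<And>r. 0 < r \<Longrightarrow> r < T \<Longrightarrow> h differentiable (at r)"
    and h_positive: "\<And>r. 0 < r \<Longrightarrow> r \<le> T \<Longrightarrow> 0 < h r"
    and h_zero: "h 0 = 0"
    and h_linear_bound: "\<exists>c \<delta>. 0 < \<delta> \<and> (\<forall>t. 0 < t \<and> t < \<delta> \<longrightarrow> h t \<le> c * t)"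
begin

lemma h_nonneg: "0 \<le> r \<Longrightarrow> r \<le> T \<Longrightarrow> 0 \<le> h r"
  using h_positive[of r] h_zero by (cases "r = 0") auto

lemma primitive_has_derivative:
  "0 < r \<Longrightarrow> r < T \<Longrightarrow> (radial_primitive h has_real_derivative h r) (at r)"
  using integral_has_real_derivative[OF h_continuous, of r] at_within_Icc_at[of 0 r T]
  unfolding radial_primitive_def[abs_def] by simp

lemma primitive_continuous: "continuous_on {0..T} (radial_primitive h)"
  unfolding radial_primitive_def[abs_def]
  by (rule indefinite_integral_continuous_1) (intro integrable_continuous_real h_continuous)

lemma power_integral_has_derivative:
  assumes "0 \<le> r" "r \<le> T"
  shows "((\<lambda>r. integral {0..r} (\<lambda>t. h t ^ m)) has_real_derivative h r ^ m) (at r within {0..T})"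
proof -
  have "continuous_on {0..T} (\<lambda>t. h t ^ m)" using h_continuous by (intro continuous_intros)
  then show ?thesis using integral_has_real_derivative assms by auto
qed

lemma power_integral_nonneg: "0 \<le> t \<Longrightarrow> t \<le> T \<Longrightarrow> 0 \<le> integral {0..t} (\<lambda>s. h s ^ m)"
  using h_nonneg h_continuous
  by (intro integral_nonneg integrable_continuous_real continuous_intros) (auto elim: continuous_on_subset)

lemma barrier_slope_pos: "0 < t \<Longrightarrow> t \<le> T \<Longrightarrow> 0 < barrier_slope h m t"
  using power_integral_nonneg[of t m] h_positive[of t] by (simp add: barrier_slope_def add_pos_nonneg)

lemma barrier_slope_continuous: "0 < a \<Longrightarrow> continuous_on {a..T} (barrier_slope h m)"
proof -
  assume a: "0 < a"
  have I: "continuous_on {0..T} (\<lambda>r. integral {0..r} (\<lambda>t. h t ^ m))"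
    using power_integral_has_derivative DERIV_continuous continuous_on_eq_continuous_within
    by (metis atLeastAtMost_iff)
  have "h r ^ m \<noteq> 0" if "a \<le> r" "r \<le> T" for r
    using h_positive[of r] a that by simp
  then show ?thesis
    unfolding barrier_slope_def[abs_def] using a
    by (intro continuous_intros continuous_on_subset[OF I] continuous_on_subset[OF h_continuous]) auto
qed

lemma barrier_has_derivative:
  assumes "0 < r" "r < T"
  shows "(barrier h m T has_real_derivative barrier_slope h m r) (at r)"
proof -
  have "((\<lambda>x. integral {x..T} (barrier_slope h m)) has_real_derivative - barrier_slope h m r)
      (at r within {r/2..T})"
    using integral_has_real_derivative'[OF barrier_slope_continuous[of "r/2" m], of r] assms by simp
  moreover have "at r within {r/2..T} = at r" using assms by (intro at_within_Icc_at) auto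
  ultimately show ?thesis
    unfolding barrier_def[abs_def] using DERIV_minus by fastforce
qed

lemma barrier_nonpos:
  assumes "0 < r" "r \<le> T"
  shows "barrier h m T r \<le> 0"
proof -
  have "continuous_on {r..T} (barrier_slope h m)" using assms(1) by (rule barrier_slope_continuous)
  then have "0 \<le> integral {r..T} (barrier_slope h m)"
    using barrier_slope_pos[of _ m] assms
    by (intro integral_nonneg integrable_continuous_real) (auto intro: less_imp_le)
  then show ?thesis by (simp add: barrier_def)
qed

lemma barrier_slope_differentiable:
  assumes "0 < r" "r < T"
  shows "barrier_slope h m differentiable (at r)"
proof -
  have "((\<lambda>r. integral {0..r} (\<lambda>t. h t ^ m)) has_real_derivative h r ^ m) (at r)"
    using power_integral_has_derivative[of r m] at_within_Icc_at[of 0 r T] assms by simp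
  then have "(\<lambda>r. integral {0..r} (\<lambda>t. h t ^ m)) differentiable (at r)"
    using real_differentiable_def by blast
  then show ?thesis
    unfolding barrier_slope_def[abs_def] real_differentiable_def[symmetric]
    using h_differentiable[OF assms] h_positive[of r] assms by (intro derivative_intros) auto
qed

lemma barrier_slope_lower_bound:
  assumes "1 \<le> m"
  obtains C a where "0 < C" "0 < a" "a < T" "\<And>t. 0 < t \<Longrightarrow> t \<le> a \<Longrightarrow> 1 / (C * t) \<le> barrier_slope h m t"
proof -
  obtain c \<delta> where \<delta>: "0 < \<delta>" "\<And>t. 0 < t \<Longrightarrow> t < \<delta> \<Longrightarrow> h t \<le> c * t"
    using h_linear_bound by blast
  define C where "C = max c 1"
  have "h t \<le> C * t" if "0 < t" "t < \<delta>" for t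
  proof -
    have "c * t \<le> C * t" using that by (intro mult_right_mono) (auto simp: C_def)
    then show ?thesis using \<delta>(2)[OF that] by linarith
  qed
  then have C: "0 < C" "\<And>t. 0 < t \<Longrightarrow> t < \<delta> \<Longrightarrow> h t \<le> C * t"
    by (auto simp: C_def)
  define a where "a = min (\<delta> / 2) (min (1 / (2 * C)) (T / 2))"
  have "a \<le> \<delta> / 2" "a \<le> 1 / (2 * C)" "a \<le> T / 2" by (simp_all add: a_def)
  moreover have "0 < a" using \<delta> C T_pos by (simp add: a_def)
  ultimately have a: "0 < a" "a < \<delta>" "C * a < 1" "a < T"
    using \<delta> C T_pos by (simp_all add: field_simps)
  have "1 / (C * t) \<le> barrier_slope h m t" if t: "0 < t" "t \<le> a" for t
  proof -
    have ht: "0 < h t" "h t \<le> C * t" using h_positive[of t] C(2)[of t] t a by auto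
    moreover have "C * t < 1" using a t C(1) by (smt (verit) mult_left_mono)
    ultimately have "h t ^ m \<le> C * t"
      using power_decreasing[of 1 m "h t"] assms by simp
    moreover have "0 \<le> integral {0..t} (\<lambda>s. h s ^ m)" using power_integral_nonneg t a by simp
    ultimately show ?thesis
      using ht by (auto simp: barrier_slope_def intro!: frac_le)
  qed
  then show ?thesis using that C(1) a(1,4) by blast
qed

lemma barrier_at_pole:
  assumes "1 \<le> m"
  shows "filterlim (barrier h m T) at_bot (at_right 0)"
proof -
  obtain C a where C: "0 < C" and a: "0 < a" "a < T"
    and slope: "\<And>t. 0 < t \<Longrightarrow> t \<le> a \<Longrightarrow> 1 / (C * t) \<le> barrier_slope h m t"
    using barrier_slope_lower_bound[OF assms] by blast
  define L where "L r = barrier h m T r - ln r / C" for r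
  have L_mono: "L r \<le> L a" if r: "0 < r" "r \<le> a" for r
  proof -
    have L': "(L has_real_derivative barrier_slope h m x - 1 / (C * x)) (at x)"
      if "r \<le> x" "x \<le> a" for x
      unfolding L_def[abs_def] using that r a C
      by (auto intro!: derivative_eq_intros barrier_has_derivative simp: field_simps)
    show ?thesis
    proof (rule DERIV_nonneg_imp_increasing_open[OF r(2)])
      show "continuous_on {r..a} L"
        by (intro continuous_at_imp_continuous_on ballI DERIV_isCont[OF L']) auto
    qed (use L' slope r in \<open>force\<close>)
  qed
  show ?thesis
    unfolding filterlim_at_bot
  proof
    fix Z
    have "\<forall>\<^sub>F r in at_right 0. ln r \<le> C * (Z - L a)"
      using ln_at_0 unfolding filterlim_at_bot by blast
    moreover have "\<forall>\<^sub>F r in at_right 0. r \<le> a"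
      using a(1) unfolding eventually_at_right_field by (auto intro!: exI[of _ a])
    moreover have "\<forall>\<^sub>F r in at_right (0::real). 0 < r"
      by (simp add: eventually_at_right_less)
    ultimately show "\<forall>\<^sub>F r in at_right 0. barrier h m T r \<le> Z"
    proof eventually_elim
      case (elim r)
      then have "barrier h m T r \<le> L a + ln r / C" using L_mono[of r] by (simp add: L_def)
      also have "\<dots> \<le> Z" using elim C(1) by (simp add: field_simps)
      finally show ?case .
    qed
  qed
qed

lemma laplace_beltrami_primitive:
  fixes z :: "real^'n"
  assumes z: "z \<in> ball 0 T - {0}"
  shows "laplace_beltrami h (\<lambda>x. radial_primitive h (norm x)) z = real CARD('n) * deriv h (norm z)"
proof -
  define N where "N = CARD('n)"
  define r where "r = norm z"
  have r: "0 < r" "r < T" using z by (auto simp: r_def)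
  have hr: "(h has_real_derivative deriv h r) (at r)"
    using h_differentiable[OF r] DERIV_deriv_iff_real_differentiable by blast
  define \<psi> where "\<psi> s = (h s / s) ^ N" for s
  define \<psi>' where "\<psi>' = real N * (h r / r) ^ (N - 1) * ((deriv h r * r - h r) / (r * r))"
  have d: "(\<psi> has_real_derivative \<psi>') (at (norm z))"
    unfolding \<psi>_def[abs_def] \<psi>'_def
    using DERIV_power[OF DERIV_divide[OF hr DERIV_ident], of N] r by (simp add: mult_ac r_def)
  have "laplace_beltrami h (\<lambda>x. radial_primitive h (norm x)) z =
      (norm z * \<psi>' + real CARD('n) * \<psi> (norm z)) / vol_density h z"
  proof (rule laplace_beltrami_radial[of z "ball 0 T - {0}"])
    fix y :: "real^'n" assume y: "y \<in> ball 0 T - {0}"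
    then show "h (norm y) \<noteq> 0" using h_positive[of "norm y"] by auto
    show "(radial_primitive h has_real_derivative h (norm y)) (at (norm y))"
      using primitive_has_derivative y by auto
    have "\<psi> (norm y) = (h (norm y) / norm y) ^ (CARD('n) - 1) * (h (norm y) / norm y)"
      unfolding \<psi>_def N_def by (metis card_eq_Suc power_Suc2)
    then show "\<psi> (norm y) = vol_density h y * h (norm y) / norm y"
      by (simp add: vol_density_def)
  qed (use z d in auto)
  also have "\<dots> = (r * \<psi>' + real N * \<psi> r) / vol_density h z" by (simp add: r_def N_def)
  also have "\<dots> = real N * deriv h r"
  proof -
    define \<rho> where "\<rho> = h r / r"
    have "\<rho> \<noteq> 0" using h_positive[of r] r by (simp add: \<rho>_def)
    moreover have "vol_density h z = \<rho> ^ (N - 1)" by (simp add: vol_density_def \<rho>_def r_def N_def)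
    moreover have "\<psi> r = \<rho> ^ (N - 1) * \<rho>"
      unfolding \<psi>_def \<rho>_def[symmetric] N_def by (metis card_eq_Suc power_Suc2)
    ultimately show ?thesis
      using r unfolding \<psi>'_def \<rho>_def[symmetric] by (simp add: \<rho>_def field_simps)
  qed
  finally show ?thesis by (simp add: N_def r_def)
qed

lemma laplace_beltrami_barrier:
  fixes z :: "real^'n"
  assumes z: "z \<in> ball 0 T - {0}"
  shows "laplace_beltrami h (\<lambda>x. barrier h (CARD('n) - 1) T (norm x)) z = 1"
proof -
  define N where "N = CARD('n)"
  define m where "m = N - 1"
  define r where "r = norm z"
  define I where "I s = integral {0..s} (\<lambda>t. h t ^ m)" for s
  have r: "0 < r" "r < T" using z by (auto simp: r_def)
  have NS: "N = Suc m" unfolding N_def m_def by (rule card_eq_Suc)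
  have I: "(I has_real_derivative h r ^ m) (at r)"
    using power_integral_has_derivative[of r m] at_within_Icc_at[of 0 r T] r by (simp add: I_def[abs_def])
  define \<psi> where "\<psi> s = (1 + I s) / s ^ N" for s
  define \<psi>' where "\<psi>' = (h r ^ m * r ^ N - (1 + I r) * (real N * r ^ (N - 1))) / (r ^ N * r ^ N)"
  have d: "(\<psi> has_real_derivative \<psi>') (at (norm z))"
    unfolding \<psi>_def[abs_def] \<psi>'_def
    using DERIV_divide[OF DERIV_add[OF DERIV_const I] DERIV_pow[of N r]] r by (simp add: r_def)
  have "laplace_beltrami h (\<lambda>x. barrier h m T (norm x)) z =
      (norm z * \<psi>' + real CARD('n) * \<psi> (norm z)) / vol_density h z"
  proof (rule laplace_beltrami_radial[of z "ball 0 T - {0}"])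
    fix y :: "real^'n" assume y: "y \<in> ball 0 T - {0}"
    then have "0 < h (norm y)" using h_positive[of "norm y"] by auto
    then show "h (norm y) \<noteq> 0" by simp
    show "(barrier h m T has_real_derivative barrier_slope h m (norm y)) (at (norm y))"
      using barrier_has_derivative y by auto
    show "\<psi> (norm y) = vol_density h y * barrier_slope h m (norm y) / norm y"
      unfolding \<psi>_def vol_density_def barrier_slope_def I_def N_def[symmetric] m_def[symmetric]
      using \<open>0 < h (norm y)\<close> y by (subst NS) (simp add: power_Suc power_divide field_simps)
  qed (use z d in auto)
  also have "\<dots> = (r * \<psi>' + real N * \<psi> r) / vol_density h z" by (simp add: r_def N_def)
  also have "\<dots> = 1"
  proof -
    have "0 < h r" using h_positive[of r] r by simp
    moreover have "vol_density h z = h r ^ m / r ^ m"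
      by (simp add: vol_density_def r_def N_def m_def power_divide)
    ultimately show ?thesis
      unfolding \<psi>'_def \<psi>_def using r by (subst NS)+ (simp add: field_simps power_Suc)
  qed
  finally show ?thesis by (simp add: m_def N_def)
qed

lemma twice_differentiable_on_primitive:
  "twice_differentiable_on (ball 0 T - {0}) (\<lambda>x::real^'n. radial_primitive h (norm x))"
  using primitive_has_derivative h_differentiable by (rule twice_differentiable_on_radial)

lemma twice_differentiable_on_barrier:
  "twice_differentiable_on (ball 0 T - {0}) (\<lambda>x::real^'n. barrier h m T (norm x))"
  using barrier_has_derivative barrier_slope_differentiable by (rule twice_differentiable_on_radial)

lemma barrier_perturbation_no_interior_max:
  fixes \<Omega> :: "(real^'n) set" and w :: "real^'n \<Rightarrow> real"
  assumes \<Omega>: "open \<Omega>" "\<Omega> \<subseteq> ball 0 T"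
    and w: "twice_differentiable_on (\<Omega> - {0}) w" "\<And>z. z \<in> \<Omega> - {0} \<Longrightarrow> 0 \<le> laplace_beltrami h w z"
    and e: "0 < e" and z: "z \<in> \<Omega> - {0}"
  defines "W \<equiv> \<lambda>y. w y + e * barrier h (CARD('n) - 1) T (norm y)"
  shows "\<exists>y\<in>\<Omega> - {0}. W z < W y"
proof (rule ccontr)
  assume "\<not> (\<exists>y\<in>\<Omega> - {0}. W z < W y)"
  then have max: "\<And>y. y \<in> \<Omega> - {0} \<Longrightarrow> W y \<le> W z" by (simp add: not_less)
  define F where "F = (\<lambda>y::real^'n. barrier h (CARD('n) - 1) T (norm y))"
  have W_eq: "W = (\<lambda>y. 1 * w y + e * F y)" by (simp add: W_def F_def)
  have A: "open (\<Omega> - {0})" "\<Omega> - {0} \<subseteq> ball 0 T - {0}" using \<Omega> by auto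
  have F: "twice_differentiable_on (\<Omega> - {0}) F"
    unfolding F_def by (rule twice_differentiable_on_subset[OF twice_differentiable_on_barrier A(2)])
  have z0: "z \<noteq> 0" "norm z < T" using z \<Omega>(2) by auto
  then have hz: "h differentiable (at (norm z))" "0 < h (norm z)"
    using h_differentiable h_positive by auto
  have "twice_differentiable_on (\<Omega> - {0}) W"
    unfolding W_eq using A(1) w(1) F by (rule twice_differentiable_on_lincomb)
  from laplace_beltrami_nonpos_at_max[OF z0(1) A(1) z this max hz]
  have "laplace_beltrami h W z \<le> 0" .
  moreover have "laplace_beltrami h W z = 1 * laplace_beltrami h w z + e * laplace_beltrami h F z"
    unfolding W_eq using z0 hz A w(1) F z by (intro laplace_beltrami_lincomb) auto
  moreover have "laplace_beltrami h F z = 1"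
    unfolding F_def using z0 by (intro laplace_beltrami_barrier) auto
  ultimately show False using w(2)[OF z] e by simp
qed

text \<open>The barrier tends to \<open>-\<infinity>\<close> at the pole, so adding a small multiple of it to a
  subharmonic function pushes its maximum away from the pole and onto the boundary.\<close>
lemma barrier_perturbation_max_on_frontier:
  fixes \<Omega> :: "(real^'n) set" and w :: "real^'n \<Rightarrow> real"
  assumes \<Omega>: "open \<Omega>" "closure \<Omega> \<subseteq> ball 0 T" and dim: "2 \<le> CARD('n)"
    and w: "continuous_on (closure \<Omega>) w" "twice_differentiable_on (\<Omega> - {0}) w"
      "\<And>z. z \<in> \<Omega> - {0} \<Longrightarrow> 0 \<le> laplace_beltrami h w z"
    and e: "0 < e" and x: "x \<in> \<Omega> - {0}"
  shows "\<exists>z\<in>frontier \<Omega>. w x + e * barrier h (CARD('n) - 1) T (norm x)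
    \<le> w z + e * barrier h (CARD('n) - 1) T (norm z)"
proof -
  define F where "F = (\<lambda>y::real^'n. barrier h (CARD('n) - 1) T (norm y))"
  define W where "W y = w y + e * F y" for y
  have F: "twice_differentiable_on (ball 0 T - {0}) F"
    unfolding F_def by (rule twice_differentiable_on_barrier)
  have "continuous_on (closure \<Omega> - {0}) F"
  proof (intro continuous_at_imp_continuous_on ballI)
    fix y assume "y \<in> closure \<Omega> - {0}"
    then have "F differentiable (at y)" using F \<Omega>(2) unfolding twice_differentiable_on_def by auto
    then show "isCont F y" by (rule differentiable_imp_continuous_within)
  qed
  then have W_cont: "continuous_on (closure \<Omega> - {0}) W"
    unfolding W_def[abs_def] using continuous_on_subset[OF w(1)] by (intro continuous_intros) auto
  have "bounded (closure \<Omega>)" using \<Omega>(2) by (rule bounded_subset[OF bounded_ball])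
  then have cpt: "compact (closure \<Omega>)" by (simp add: compact_eq_bounded_closed)
  obtain B where B: "\<And>y. y \<in> closure \<Omega> \<Longrightarrow> w y \<le> B"
    using compact_imp_bounded[OF compact_continuous_image[OF w(1) cpt]]
    by (auto simp: bounded_iff abs_le_iff)
  have "\<forall>\<^sub>F r in at_right 0. barrier h (CARD('n) - 1) T r < (W x - B) / e"
    using barrier_at_pole[of "CARD('n) - 1"] dim unfolding filterlim_at_bot_dense by simp
  then obtain d where d: "0 < d" "\<And>r. 0 < r \<Longrightarrow> r < d \<Longrightarrow> barrier h (CARD('n) - 1) T r < (W x - B) / e"
    unfolding eventually_at_right_field by auto
  have near_pole: "W y < W x" if "y \<in> closure \<Omega> - {0}" "norm y < d" for y
    using d(2)[of "norm y"] B[of y] that e by (simp add: W_def F_def field_simps)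
  obtain z where z: "z \<in> closure \<Omega>" "d \<le> norm z" "\<And>y. y \<in> closure \<Omega> - {0} \<Longrightarrow> W y \<le> W z"
    using continuous_attains_sup_off_pole[OF cpt W_cont _ d(1) near_pole] x closure_subset by blast
  have "z \<notin> \<Omega>"
  proof
    assume "z \<in> \<Omega>"
    then have "z \<in> \<Omega> - {0}" using z(2) d(1) by auto
    moreover have "\<Omega> \<subseteq> ball 0 T" using \<Omega>(2) closure_subset by blast
    ultimately obtain y where y: "y \<in> \<Omega> - {0}" "W z < W y"
      using barrier_perturbation_no_interior_max[OF \<Omega>(1) _ w(2,3) e] unfolding W_def F_def by blast
    then have "y \<in> closure \<Omega> - {0}" using closure_subset by blast
    then show False using z(3) y(2) by (simp add: not_le[symmetric])
  qed
  then have "z \<in> frontier \<Omega>" using z(1) \<Omega>(1) by (simp add: frontier_def interior_open)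
  moreover have "W x \<le> W z" using z(3) x closure_subset by auto
  ultimately show ?thesis unfolding W_def F_def by blast
qed

lemma max_principle:
  fixes \<Omega> :: "(real^'n) set" and w :: "real^'n \<Rightarrow> real"
  assumes \<Omega>: "open \<Omega>" "closure \<Omega> \<subseteq> ball 0 T" "0 \<in> \<Omega>" and dim: "2 \<le> CARD('n)"
    and w: "continuous_on (closure \<Omega>) w" "twice_differentiable_on (\<Omega> - {0}) w"
      "\<And>z. z \<in> \<Omega> - {0} \<Longrightarrow> 0 \<le> laplace_beltrami h w z"
    and bdry: "\<And>y. y \<in> frontier \<Omega> \<Longrightarrow> w y \<le> M"
    and x: "x \<in> closure \<Omega>"
  shows "w x \<le> M"
proof -
  define F where "F = (\<lambda>y::real^'n. barrier h (CARD('n) - 1) T (norm y))"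
  have frontier_eq: "frontier \<Omega> = closure \<Omega> - \<Omega>"
    using \<Omega>(1) by (simp add: frontier_def interior_open)
  have interior: "w y \<le> M" if y: "y \<in> \<Omega> - {0}" for y
  proof (rule field_le_epsilon)
    fix \<epsilon> :: real assume \<epsilon>: "0 < \<epsilon>"
    define e where "e = \<epsilon> / (\<bar>F y\<bar> + 1)"
    have e: "0 < e" using \<epsilon> by (simp add: e_def add_nonneg_pos)
    have "e * (- F y) \<le> e * (\<bar>F y\<bar> + 1)" using e by (intro mult_left_mono) auto
    also have "\<dots> = \<epsilon>" unfolding e_def by (simp add: add_nonneg_pos)
    finally have e_small: "- (e * F y) \<le> \<epsilon>" by simp
    obtain z where z: "z \<in> frontier \<Omega>" "w y + e * F y \<le> w z + e * F z"
      using barrier_perturbation_max_on_frontier[OF \<Omega>(1,2) dim w e y] by (auto simp: F_def)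
    have "0 < norm z" "norm z \<le> T" using z(1) \<Omega>(2,3) frontier_eq by (auto simp: less_imp_le)
    then have "e * F z \<le> 0" using e barrier_nonpos by (simp add: F_def mult_nonneg_nonpos)
    with z(2) e_small bdry[OF z(1)] show "w y \<le> M + \<epsilon>" by linarith
  qed
  consider "x \<in> frontier \<Omega>" | "x \<in> \<Omega> - {0}" | "x = 0"
    using x frontier_eq by blast
  then show ?thesis
  proof cases
    case 3
    have "0 \<in> closure (\<Omega> - {0})"
      using not_trivial_limit_within[of 0 \<Omega>] at_within_open[OF \<Omega>(3,1)] by simp
    moreover have "continuous_on (closure (\<Omega> - {0})) w"
      using w(1) by (rule continuous_on_subset) (simp add: closure_mono)
    ultimately show ?thesis
      using continuous_le_on_closure[of "\<Omega> - {0}" w 0 M] interior 3 by blast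
  qed (use bdry interior in blast)+
qed

lemma shifted_has_derivative_along_ray:
  fixes u :: "real^'n \<Rightarrow> real"
  assumes u: "u differentiable (at (p - s *\<^sub>R e))" and r: "0 < r - s" "r - s < T"
  shows "((\<lambda>s. c * (u (p - s *\<^sub>R e) + radial_primitive h (r - s))) has_real_derivative
    - c * (egrad u (p - s *\<^sub>R e) \<bullet> e + h (r - s))) (at s)"
proof -
  have "(u has_derivative (\<lambda>v. egrad u (p - s *\<^sub>R e) \<bullet> v)) (at (p + s *\<^sub>R - e))"
    using has_derivative_egrad[OF u] by simp
  from has_real_derivative_along_line[OF this]
  have du: "((\<lambda>s. u (p - s *\<^sub>R e)) has_real_derivative - (egrad u (p - s *\<^sub>R e) \<bullet> e)) (at s)"
    by simp
  from DERIV_chain2[OF primitive_has_derivative[OF r] DERIV_diff[OF DERIV_const DERIV_ident]]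
  have "((\<lambda>s. radial_primitive h (r - s)) has_real_derivative h (r - s) * (0 - 1)) (at s)" .
  from DERIV_cmult[OF DERIV_add[OF du this], of c] show ?thesis by (simp add: algebra_simps)
qed

text \<open>No Hopf lemma is needed: \<open>u\<close> is \<open>C\<^sup>1\<close> up to the boundary, so the one-sided radial
  derivative at \<open>p\<close> is the limit of the interior ones.\<close>
lemma radial_derivative_at_boundary_max:
  fixes \<Omega> :: "(real^'n) set" and u :: "real^'n \<Rightarrow> real" and G :: "real^'n \<Rightarrow> real^'n"
  assumes p: "p \<in> closure \<Omega>" "p \<noteq> 0" "norm p < T"
    and seg: "0 < \<delta>" "\<And>t. 0 < t \<Longrightarrow> t < \<delta> \<Longrightarrow> p - t *\<^sub>R sgn p \<in> \<Omega>"
    and u: "continuous_on (closure \<Omega>) u" "continuous_on (closure \<Omega>) G"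
      "\<And>x. x \<in> \<Omega> \<Longrightarrow> u differentiable (at x)" "\<And>x. x \<in> \<Omega> \<Longrightarrow> G x = egrad u x"
    and max: "\<And>y. y \<in> \<Omega> \<Longrightarrow>
      c * (u y + radial_primitive h (norm y)) \<le> c * (u p + radial_primitive h (norm p))"
  shows "0 \<le> c * (G p \<bullet> sgn p + h (norm p))"
proof -
  define r where "r = norm p"
  define e where "e = sgn p"
  define d where "d = min \<delta> r / 2"
  have r: "0 < r" "r < T" using p by (auto simp: r_def)
  then have d: "0 < d" "d < \<delta>" "d < r" using seg(1) by (auto simp: d_def)
  have seg_norm: "norm (p - s *\<^sub>R e) = r - s" if "0 \<le> s" "s \<le> r" for s
    using norm_diff_scaleR_sgn that by (simp add: r_def e_def)
  have seg_in: "p - s *\<^sub>R e \<in> \<Omega>" if "0 < s" "s \<le> d" for s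
    using seg(2) that d by (simp add: e_def)
  have seg_closure: "p - s *\<^sub>R e \<in> closure \<Omega>" if "s \<in> {0..d}" for s
  proof (cases "s = 0")
    case False
    then show ?thesis using seg_in[of s] that closure_subset by auto
  qed (use p(1) in simp)
  define f where "f s = c * (u (p - s *\<^sub>R e) + radial_primitive h (r - s))" for s
  define f' where "f' s = - c * (G (p - s *\<^sub>R e) \<bullet> e + h (r - s))" for s
  have "continuous_on {0..d} (\<lambda>s. u (p - s *\<^sub>R e))"
    by (rule continuous_on_compose2[OF u(1)]) (use seg_closure in \<open>auto intro!: continuous_intros\<close>)
  moreover have "continuous_on {0..d} (\<lambda>s. radial_primitive h (r - s))"
    by (rule continuous_on_compose2[OF primitive_continuous]) (use d r in \<open>auto intro!: continuous_intros\<close>)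
  ultimately have "continuous_on {0..d} f"
    unfolding f_def by (intro continuous_intros)
  moreover have "(f has_real_derivative f' s) (at s)" if s: "0 < s" "s < d" for s
  proof -
    have q: "p - s *\<^sub>R e \<in> \<Omega>" using seg_in s by simp
    have "0 < r - s" "r - s < T" using s d r by auto
    from shifted_has_derivative_along_ray[OF u(3)[OF q] this, of c] show ?thesis
      unfolding f_def[abs_def] f'_def by (simp add: u(4)[OF q])
  qed
  moreover have "(f' \<longlongrightarrow> - c * (G p \<bullet> e + h r)) (at_right 0)"
  proof -
    have "((\<lambda>s. p - s *\<^sub>R e) \<longlongrightarrow> p) (at_right 0)" by (auto intro!: tendsto_eq_intros)
    moreover have "\<forall>\<^sub>F s in at_right 0. p - s *\<^sub>R e \<in> closure \<Omega>"
      unfolding eventually_at_right_field using d seg_closure by auto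
    ultimately have "((\<lambda>s. G (p - s *\<^sub>R e)) \<longlongrightarrow> G p) (at_right 0)"
      using continuous_on_tendsto_compose[OF u(2) _ p(1)] by blast
    moreover have "((\<lambda>s. h (r - s)) \<longlongrightarrow> h r) (at_right 0)"
      using differentiable_imp_continuous_within[OF h_differentiable[OF r]]
      by (intro isCont_tendsto_compose[of r h]) (auto intro!: tendsto_eq_intros)
    ultimately show ?thesis unfolding f'_def by (intro tendsto_intros)
  qed
  moreover have "f s \<le> f 0" if "0 < s" "s < d" for s
  proof -
    have "p - s *\<^sub>R e \<in> \<Omega>" using seg_in that by simp
    from max[OF this] show ?thesis using seg_norm[of s] that d by (simp add: f_def r_def)
  qed
  ultimately have "- c * (G p \<bullet> e + h r) \<le> 0"
    by (rule derivative_limit_nonpos_at_right_max[OF d(1)])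
  then show ?thesis by (simp add: e_def r_def)
qed

lemma primitive_shift_mono:
  assumes ab: "0 < a" "b < T"
    and \<phi>: "\<And>r. r \<in> {a..b} \<Longrightarrow> (\<phi> has_real_derivative \<phi>' r) (at r within {a..b})"
    and slope: "\<And>r. r \<in> {a..b} \<Longrightarrow> - h r \<le> \<phi>' r"
  shows "mono_on {a..b} (\<lambda>r. \<phi> r + radial_primitive h r)"
proof (rule mono_onI)
  fix x y assume xy: "x \<in> {a..b}" "y \<in> {a..b}" "x \<le> y"
  show "\<phi> x + radial_primitive h x \<le> \<phi> y + radial_primitive h y"
  proof (cases "x = y")
    case False
    then have lt: "x < y" using xy(3) by simp
    have "((\<lambda>r. \<phi> r + radial_primitive h r) has_derivative (\<lambda>t. (\<phi>' s + h s) * t)) (at s within {x..y})"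
      if "x \<le> s" "s \<le> y" for s
    proof -
      have s: "s \<in> {a..b}" "0 < s" "s < T" using that xy ab by auto
      have "(\<phi> has_real_derivative \<phi>' s) (at s within {x..y})"
        by (rule DERIV_subset[OF \<phi>[OF s(1)]]) (use xy in auto)
      moreover have "(radial_primitive h has_real_derivative h s) (at s within {x..y})"
        using primitive_has_derivative[OF s(2,3)] by (rule has_field_derivative_at_within)
      ultimately have "((\<lambda>r. \<phi> r + radial_primitive h r) has_real_derivative \<phi>' s + h s) (at s within {x..y})"
        by (rule DERIV_add)
      then show ?thesis by (simp add: has_field_derivative_def)
    qed
    from mvt_simple[OF lt this] obtain s where s: "s \<in> {x<..<y}"
      "(\<phi> y + radial_primitive h y) - (\<phi> x + radial_primitive h x) = (\<phi>' s + h s) * (y - x)"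
      by blast
    have "0 \<le> \<phi>' s + h s" using slope[of s] s(1) xy by auto
    then have "0 \<le> (\<phi>' s + h s) * (y - x)" using lt by simp
    then show ?thesis using s(2) by simp
  qed simp
qed

end

section \<open>The overdetermined problem\<close>

lemma compact_subset_ball_in_model_space:
  assumes "compact K" "K \<subseteq> model_space S" "ereal R < S"
  obtains T where "R < T" "ereal T < S" "K \<subseteq> ball 0 T"
proof (cases "K = {}")
  case True
  obtain T where "ereal R < ereal T" "ereal T < S" using ereal_dense2[OF assms(3)] by blast
  then show ?thesis using that True by simp
next
  case False
  then obtain p where p: "p \<in> K" "\<And>x. x \<in> K \<Longrightarrow> norm x \<le> norm p"
    using continuous_attains_sup[OF assms(1) _ continuous_on_norm_id] by blast
  have "ereal (max (norm p) R) < S"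
    using p(1) assms(2,3) by (auto simp: model_space_def max_def)
  then obtain T where T: "ereal (max (norm p) R) < ereal T" "ereal T < S"
    using ereal_dense2 by blast
  then have "K \<subseteq> ball 0 T" "R < T" using p(2) by fastforce+
  with T(2) show ?thesis using that by blast
qed

lemma linear_bound_near_zero:
  fixes h :: "real \<Rightarrow> real"
  assumes "(h has_real_derivative c) (at 0 within I)" "h 0 = 0"
  obtains \<delta> where "0 < \<delta>" "\<And>t. t \<in> I \<Longrightarrow> 0 < t \<Longrightarrow> t < \<delta> \<Longrightarrow> h t \<le> (c + 1) * t"
proof -
  have "((\<lambda>t. (h t - h 0) / (t - 0)) \<longlongrightarrow> c) (at 0 within I)"
    using assms(1) by (simp add: has_field_derivative_iff)
  from order_tendstoD(2)[OF this, of "c + 1"]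
  have "\<forall>\<^sub>F t in at 0 within I. h t / t < c + 1" using assms(2) by simp
  then obtain \<delta> where \<delta>: "0 < \<delta>" "\<And>t. t \<in> I \<Longrightarrow> t \<noteq> 0 \<Longrightarrow> dist t 0 < \<delta> \<Longrightarrow> h t / t < c + 1"
    unfolding eventually_at by blast
  have "h t \<le> (c + 1) * t" if "t \<in> I" "0 < t" "t < \<delta>" for t
    using \<delta>(2)[of t] that by (simp add: field_simps)
  then show ?thesis using that \<delta>(1) by blast
qed

lemma smooth_profile_has_derivative:
  assumes smooth: "smooth_profile S h D" and r: "0 \<le> r" "ereal r < S"
  shows "(h has_real_derivative D 1 r) (at r within {t. 0 \<le> t \<and> ereal t < S})"
proof -
  have "(D 0 has_real_derivative D (Suc 0) r) (at r within {t. 0 \<le> t \<and> ereal t < S})"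
    using smooth r unfolding smooth_profile_def by blast
  then have "(D 0 has_real_derivative D 1 r) (at r within {t. 0 \<le> t \<and> ereal t < S})" by simp
  then show ?thesis
    by (rule has_field_derivative_transform_within[where d=1]) (use smooth r in \<open>auto simp: smooth_profile_def\<close>)
qed

lemma radial_profile_of_smooth_profile:
  assumes smooth: "smooth_profile S h D" and pos: "\<forall>r. 0 < r \<and> ereal r < S \<longrightarrow> 0 < h r"
    and D: "D 0 0 = 0" and T: "0 < T" "ereal T < S"
  shows "radial_profile h T"
proof -
  define I where "I = {t. 0 \<le> t \<and> ereal t < S}"
  have I_le: "t \<in> I" if "0 \<le> t" "t \<le> T" for t
  proof -
    have "ereal t \<le> ereal T" using that by simp
    then have "ereal t < S" using T(2) by (rule order.strict_trans1)
    then show ?thesis using that by (simp add: I_def)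
  qed
  have h_deriv: "(h has_real_derivative D 1 r) (at r within I)" if "r \<in> I" for r
    using smooth_profile_has_derivative[OF smooth] that by (simp add: I_def)
  have "0 \<in> I" using I_le T(1) by simp
  then have zero: "h 0 = 0" using smooth D unfolding smooth_profile_def I_def by force
  have cont: "continuous_on {0..T} h"
    unfolding continuous_on_eq_continuous_within
  proof
    fix r assume r: "r \<in> {0..T}"
    then have "continuous (at r within I) h" using DERIV_continuous[OF h_deriv[OF I_le]] by simp
    then show "continuous (at r within {0..T}) h"
      by (rule continuous_within_subset) (use I_le in auto)
  qed
  have diff: "h differentiable (at r)" if r: "0 < r" "r < T" for r
  proof -
    have "at r within I = at r"
      by (rule at_within_open_subset[of r "{0<..<T}"]) (use r I_le in auto)
    then have "(h has_real_derivative D 1 r) (at r)" using h_deriv[of r] I_le[of r] r by simp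
    then show ?thesis using real_differentiable_def by blast
  qed
  have pos': "0 < h r" if "0 < r" "r \<le> T" for r
    using pos I_le[of r] that by (simp add: I_def)
  from linear_bound_near_zero[OF h_deriv[OF \<open>0 \<in> I\<close>] zero] obtain \<delta> where
    \<delta>: "0 < \<delta>" "\<And>t. t \<in> I \<Longrightarrow> 0 < t \<Longrightarrow> t < \<delta> \<Longrightarrow> h t \<le> (D 1 0 + 1) * t"
    by blast
  have "h t \<le> (D 1 0 + 1) * t" if "0 < t" "t < min \<delta> T" for t
    using \<delta>(2)[of t] I_le[of t] that by simp
  then have lin: "\<exists>c \<delta>. 0 < \<delta> \<and> (\<forall>t. 0 < t \<and> t < \<delta> \<longrightarrow> h t \<le> c * t)"
    using \<delta>(1) T(1) by (intro exI[of _ "D 1 0 + 1"] exI[of _ "min \<delta> T"]) auto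
  show ?thesis
    unfolding radial_profile_def using T(1) cont diff pos' zero lin by blast
qed

locale radial_poisson = radial_profile h T for h T +
  fixes \<Omega> :: "(real^'n) set" and u :: "real^'n \<Rightarrow> real" and G :: "real^'n \<Rightarrow> real^'n"
  assumes dim: "2 \<le> CARD('n)"
    and domain: "open \<Omega>" "0 \<in> \<Omega>" "closure \<Omega> \<subseteq> ball 0 T"
    and regular: "C2_on \<Omega> u" "continuous_on (closure \<Omega>) u" "continuous_on (closure \<Omega>) G"
      "\<And>x. x \<in> \<Omega> \<Longrightarrow> G x = egrad u x"
    and equation: "\<And>x. x \<in> \<Omega> - {0} \<Longrightarrow> - laplace_beltrami h u x = real CARD('n) * deriv h (norm x)"
begin

lemma shifted_max_principle:
  assumes bdry: "\<And>y. y \<in> frontier \<Omega> \<Longrightarrow> c * (u y + radial_primitive h (norm y)) \<le> M"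
    and x: "x \<in> closure \<Omega>"
  shows "c * (u x + radial_primitive h (norm x)) \<le> M"
proof -
  define H where "H = (\<lambda>x::real^'n. radial_primitive h (norm x))"
  have A: "open (\<Omega> - {0})" "\<Omega> - {0} \<subseteq> ball 0 T - {0}"
    using domain closure_subset by auto
  have u: "twice_differentiable_on (\<Omega> - {0}) u"
    using C2_on_imp_twice_differentiable_on[OF regular(1)] by (rule twice_differentiable_on_subset) auto
  have H: "twice_differentiable_on (\<Omega> - {0}) H"
    using twice_differentiable_on_primitive A(2) unfolding H_def by (rule twice_differentiable_on_subset)
  have "continuous_on (closure \<Omega>) H"
    unfolding H_def using domain(3)
    by (intro continuous_on_compose2[OF primitive_continuous continuous_on_norm_id]) auto
  then have cont: "continuous_on (closure \<Omega>) (\<lambda>x. c * u x + c * H x)"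
    using regular(2) by (intro continuous_intros)
  have twice: "twice_differentiable_on (\<Omega> - {0}) (\<lambda>x. c * u x + c * H x)"
    using A(1) u H by (rule twice_differentiable_on_lincomb)
  have harmonic: "laplace_beltrami h (\<lambda>x. c * u x + c * H x) z = 0" if z: "z \<in> \<Omega> - {0}" for z
  proof -
    have "norm z < T" using z A(2) by auto
    then have "h differentiable (at (norm z))" "h (norm z) \<noteq> 0"
      using z h_differentiable h_positive[of "norm z"] by auto
    then have "laplace_beltrami h (\<lambda>x. c * u x + c * H x) z =
        c * laplace_beltrami h u z + c * laplace_beltrami h H z"
      using z A u H by (intro laplace_beltrami_lincomb) auto
    also have "laplace_beltrami h H z = real CARD('n) * deriv h (norm z)"
      unfolding H_def using z A(2) by (intro laplace_beltrami_primitive) auto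
    also have "laplace_beltrami h u z = - (real CARD('n) * deriv h (norm z))"
      using equation[OF z] by simp
    finally show ?thesis by simp
  qed
  have "c * u y + c * H y \<le> M" if "y \<in> frontier \<Omega>" for y
    using bdry[OF that] by (simp add: H_def distrib_left)
  from max_principle[OF domain(1,3,2) dim cont twice _ this x] harmonic
  show ?thesis by (simp add: H_def distrib_left)
qed

lemma normal_derivative_at_boundary_max:
  assumes p: "p \<in> frontier \<Omega>"
    and seg: "0 < \<delta>" "\<And>t. 0 < t \<Longrightarrow> t < \<delta> \<Longrightarrow> p - t *\<^sub>R sgn p \<in> \<Omega>"
    and max: "\<And>y. y \<in> frontier \<Omega> \<Longrightarrow>
      c * (u y + radial_primitive h (norm y)) \<le> c * (u p + radial_primitive h (norm p))"
  shows "0 \<le> c * (G p \<bullet> sgn p + h (norm p))"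
proof -
  have p': "p \<in> closure \<Omega>" "p \<noteq> 0" "norm p < T"
    using p domain by (auto simp: frontier_def interior_open)
  have ud: "u differentiable (at x)" if "x \<in> \<Omega>" for x
    using regular(1) that unfolding C2_on_def by blast
  have max': "c * (u y + radial_primitive h (norm y)) \<le> c * (u p + radial_primitive h (norm p))"
    if "y \<in> \<Omega>" for y
    using shifted_max_principle[OF max] that closure_subset by blast
  show ?thesis
    by (rule radial_derivative_at_boundary_max[OF p' seg(1) seg(2) regular(2,3) ud regular(4) max'])
qed

lemma radial_if_frontier_sphere:
  assumes "\<And>y. y \<in> frontier \<Omega> \<Longrightarrow> norm y = \<rho>"
    and "\<And>y. y \<in> frontier \<Omega> \<Longrightarrow> u y + radial_primitive h (norm y) = \<Phi> (norm y)"
  shows "\<forall>x\<in>closure \<Omega>. u x = \<Phi> \<rho> - radial_primitive h (norm x)"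
proof
  fix x assume x: "x \<in> closure \<Omega>"
  have "1 * (u y + radial_primitive h (norm y)) \<le> \<Phi> \<rho>"
    "(- 1) * (u y + radial_primitive h (norm y)) \<le> - \<Phi> \<rho>" if "y \<in> frontier \<Omega>" for y
    using assms that by simp_all
  from shifted_max_principle[OF this(1) x] shifted_max_principle[OF this(2) x]
  show "u x = \<Phi> \<rho> - radial_primitive h (norm x)" by simp
qed
lemma frontier_point:
  assumes "p \<in> frontier \<Omega>"
  shows "p \<notin> \<Omega>" "p \<noteq> 0" "0 < h (norm p)"
proof -
  have p: "p \<in> closure \<Omega>" "p \<notin> \<Omega>" using assms domain(1) by (auto simp: frontier_def interior_open)
  then show "p \<notin> \<Omega>" "p \<noteq> 0" using domain(2) by auto
  moreover have "norm p < T" using p(1) domain(3) by auto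
  ultimately show "0 < h (norm p)" using h_positive[of "norm p"] by simp
qed

lemma neumann_at_extremal_points:
  assumes C1: "C1_domain \<Omega>"
    and p: "p1 \<in> frontier \<Omega>" "p2 \<in> frontier \<Omega>" "ball 0 (norm p1) \<subseteq> \<Omega>" "\<Omega> \<subseteq> cball 0 (norm p2)"
    and neumann: "\<forall>p\<in>frontier \<Omega>. \<forall>U \<psi> D\<psi>. p \<in> U \<and> C1_defining \<Omega> U \<psi> D\<psi> \<longrightarrow>
                    G p \<bullet> outward_normal h D\<psi> p = \<kappa>"
  shows "G p1 \<bullet> sgn p1 = \<kappa>" "G p2 \<bullet> sgn p2 = \<kappa>"
    and "\<exists>\<delta>>0. \<forall>t. 0 < t \<and> t < \<delta> \<longrightarrow> p2 - t *\<^sub>R sgn p2 \<in> \<Omega>"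
proof -
  obtain U1 \<psi>1 D\<psi>1 where U1: "C1_defining \<Omega> U1 \<psi>1 D\<psi>1" "p1 \<in> U1"
    using C1 p(1) unfolding C1_domain_def by blast
  obtain U2 \<psi>2 D\<psi>2 where U2: "C1_defining \<Omega> U2 \<psi>2 D\<psi>2" "p2 \<in> U2"
    using C1 p(2) unfolding C1_domain_def by blast
  have "outward_normal h D\<psi>1 p1 = sgn p1"
    using outward_normal_at_nearest_boundary_point[where h=h, OF U1] frontier_point[OF p(1)] p(3)
    by simp
  then show "G p1 \<bullet> sgn p1 = \<kappa>" using neumann p(1) U1 by metis
  have "outward_normal h D\<psi>2 p2 = sgn p2"
    using outward_normal_at_farthest_boundary_point(1)[where h=h, OF U2 p(2)] frontier_point[OF p(2)]
      domain(1) p(4) by simp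
  then show "G p2 \<bullet> sgn p2 = \<kappa>" using neumann p(2) U2 by metis
  show "\<exists>\<delta>>0. \<forall>t. 0 < t \<and> t < \<delta> \<longrightarrow> p2 - t *\<^sub>R sgn p2 \<in> \<Omega>"
    using outward_normal_at_farthest_boundary_point(2)[where h=h, OF U2 p(2)] frontier_point[OF p(2)]
      domain(1) p(4) by simp
qed

lemma extremal_radii_h_le:
  assumes C1: "C1_domain \<Omega>"
    and p: "p1 \<in> frontier \<Omega>" "p2 \<in> frontier \<Omega>"
      "\<And>y. y \<in> frontier \<Omega> \<Longrightarrow> norm p1 \<le> norm y \<and> norm y \<le> norm p2"
      "0 < norm p1" "ball 0 (norm p1) \<subseteq> \<Omega>" "\<Omega> \<subseteq> cball 0 (norm p2)"
    and neumann: "\<forall>p\<in>frontier \<Omega>. \<forall>U \<psi> D\<psi>. p \<in> U \<and> C1_defining \<Omega> U \<psi> D\<psi> \<longrightarrow>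
                    G p \<bullet> outward_normal h D\<psi> p = \<kappa>"
    and dirichlet: "\<And>y. y \<in> frontier \<Omega> \<Longrightarrow> u y + radial_primitive h (norm y) = \<Phi> (norm y)"
    and mono: "mono_on {norm p1..norm p2} \<Phi>"
  shows "h (norm p1) \<le> h (norm p2)"
proof -
  note normal = neumann_at_extremal_points[OF C1 p(1,2,5,6) neumann]
  obtain \<delta> where \<delta>: "0 < \<delta>" "\<And>t. 0 < t \<Longrightarrow> t < \<delta> \<Longrightarrow> p2 - t *\<^sub>R sgn p2 \<in> \<Omega>"
    using normal(3) by blast
  have seg1: "p1 - t *\<^sub>R sgn p1 \<in> \<Omega>" if "0 < t" "t < norm p1" for t
    using p(5) norm_diff_scaleR_sgn[of t p1] that by auto
  have bounds: "\<Phi> (norm p1) \<le> \<Phi> (norm y)" "\<Phi> (norm y) \<le> \<Phi> (norm p2)" if "y \<in> frontier \<Omega>" for y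
    using mono p(3)[OF that] p(3)[OF p(1)] by (auto intro: mono_onD)
  have "0 \<le> 1 * (G p2 \<bullet> sgn p2 + h (norm p2))"
    using bounds(2) dirichlet p(2)
    by (intro normal_derivative_at_boundary_max[OF p(2) \<delta>]) auto
  moreover have "0 \<le> (- 1) * (G p1 \<bullet> sgn p1 + h (norm p1))"
    using bounds(1) dirichlet p(1,4)
    by (intro normal_derivative_at_boundary_max[OF p(1) _ seg1]) auto
  ultimately show ?thesis using normal(1,2) by simp
qed

lemma extremal_radii_equal:
  assumes C1: "C1_domain \<Omega>"
    and p: "p1 \<in> frontier \<Omega>" "p2 \<in> frontier \<Omega>"
      "\<And>y. y \<in> frontier \<Omega> \<Longrightarrow> norm p1 \<le> norm y \<and> norm y \<le> norm p2"
      "0 < norm p1" "ball 0 (norm p1) \<subseteq> \<Omega>" "\<Omega> \<subseteq> cball 0 (norm p2)"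
    and neumann: "\<forall>p\<in>frontier \<Omega>. \<forall>U \<psi> D\<psi>. p \<in> U \<and> C1_defining \<Omega> U \<psi> D\<psi> \<longrightarrow>
                    G p \<bullet> outward_normal h D\<psi> p = \<kappa>"
    and dirichlet: "\<And>y. y \<in> frontier \<Omega> \<Longrightarrow> u y + radial_primitive h (norm y) = \<Phi> (norm y)"
    and interval: "{norm p1<..<norm p2} \<subseteq> {R0<..<R}" "R < T"
    and mono: "mono_on {R0..R} \<Phi>"
    and decreasing: "\<And>r. R0 < r \<Longrightarrow> r < R \<Longrightarrow> deriv h r < 0"
  shows "norm p1 = norm p2"
proof (rule ccontr)
  assume "norm p1 \<noteq> norm p2"
  then have lt: "norm p1 < norm p2" using p(3)[OF p(1)] by simp
  then have sub: "R0 \<le> norm p1" "norm p2 \<le> R"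
    using interval(1) by (simp_all add: greaterThanLessThan_subseteq_greaterThanLessThan)
  have "mono_on {norm p1..norm p2} \<Phi>" by (rule mono_on_subset[OF mono]) (use sub in auto)
  from extremal_radii_h_le[OF C1 p neumann dirichlet this]
  have "h (norm p1) \<le> h (norm p2)" .
  moreover have "h (norm p2) < h (norm p1)"
  proof (rule DERIV_neg_imp_decreasing_open[OF lt])
    fix r assume r: "norm p1 < r" "r < norm p2"
    then have "0 < r" "r < T" using p(4) sub interval(2) by linarith+
    then have "(h has_real_derivative deriv h r) (at r)"
      using h_differentiable DERIV_deriv_iff_real_differentiable by blast
    moreover have "deriv h r < 0" using decreasing r sub by auto
    ultimately show "\<exists>y. (h has_real_derivative y) (at r) \<and> y < 0" by blast
  next
    show "continuous_on {norm p1..norm p2} h"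
      by (rule continuous_on_subset[OF h_continuous]) (use sub interval(2) p(4) in auto)
  qed
  ultimately show False by simp
qed

end

theorem corollary2p7:
  fixes S :: ereal and h :: "real \<Rightarrow> real" and D :: "nat \<Rightarrow> real \<Rightarrow> real"
    and \<Omega> :: "(real^'n) set" and u :: "real^'n \<Rightarrow> real" and G :: "real^'n \<Rightarrow> real^'n"
    and \<phi> d\<phi> :: "real \<Rightarrow> real" and R0 R \<kappa>0 :: real
  assumes dim: "CARD('n) \<ge> 2"
    and S_pos: "S > 0"
    and h_smooth: "smooth_profile S h D"
    and h_pos: "\<forall>r. 0 < r \<and> ereal r < S \<longrightarrow> h r > 0"
    and h_d1: "D 1 0 = 1"
    and h_even: "\<forall>k. D (2 * k) 0 = 0"
    and dom: "C1_domain \<Omega>"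
    and bdd: "bounded \<Omega>" "closure \<Omega> \<subseteq> model_space S"
    and pole: "0 \<in> \<Omega>"
    and R_int: "0 < R0" "R0 \<le> R" "ereal R < S"
    and h_decr: "\<forall>r. R0 < r \<and> r < R \<longrightarrow> deriv h r < 0"
    and R12: "{Inf (norm ` frontier \<Omega>)<..<Sup (norm ` frontier \<Omega>)} \<subseteq> {R0<..<R}"
    and phi_C1: "continuous_on {R0..R} d\<phi>"
      "\<forall>r\<in>{R0..R}. (\<phi> has_real_derivative d\<phi> r) (at r within {R0..R})"
    and phi_ge: "\<forall>r\<in>{R0..R}. d\<phi> r \<ge> - h r"
    and u_C2: "C2_on \<Omega> u"
    and u_C1bar: "continuous_on (closure \<Omega>) u" "continuous_on (closure \<Omega>) G"
      "\<forall>x\<in>\<Omega>. G x = egrad u x"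
    and pde: "\<forall>x\<in>\<Omega> - {0}. - laplace_beltrami h u x = real CARD('n) * deriv h (norm x)"
    and dirichlet: "\<forall>x\<in>frontier \<Omega>. u x = \<phi> (norm x)"
    and neumann: "\<forall>p\<in>frontier \<Omega>. \<forall>U \<psi> D\<psi>. p \<in> U \<and> C1_defining \<Omega> U \<psi> D\<psi> \<longrightarrow>
                    G p \<bullet> outward_normal h D\<psi> p = \<kappa>0"
  shows "(\<exists>f. \<forall>x\<in>closure \<Omega>. u x = f (norm x)) \<and> (\<exists>\<rho>>0. \<Omega> = ball 0 \<rho>)"
proof -
  have "compact (closure \<Omega>)" using bdd(1) by (simp add: compact_closure)
  then obtain T where T: "R < T" "ereal T < S" "closure \<Omega> \<subseteq> ball 0 T"
    using compact_subset_ball_in_model_space[OF _ bdd(2) R_int(3)] by blast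
  have "D 0 0 = 0" "0 < T" using h_even[rule_format, of 0] T(1) R_int by auto
  then have "radial_profile h T"
    using radial_profile_of_smooth_profile[OF h_smooth h_pos _ _ T(2)] by blast
  then interpret radial_poisson h T \<Omega> u G
    using dim dom pole T(3) u_C2 u_C1bar pde
    by (intro radial_poisson.intro radial_poisson_axioms.intro) (auto simp: C1_domain_def)
  obtain p1 p2 where p: "p1 \<in> frontier \<Omega>" "p2 \<in> frontier \<Omega>"
      "\<And>y. y \<in> frontier \<Omega> \<Longrightarrow> norm p1 \<le> norm y \<and> norm y \<le> norm p2"
      "0 < norm p1" "ball 0 (norm p1) \<subseteq> \<Omega>" "\<Omega> \<subseteq> cball 0 (norm p2)"
      "Inf (norm ` frontier \<Omega>) = norm p1" "Sup (norm ` frontier \<Omega>) = norm p2"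
    using frontier_extremal_points[OF dim bdd(1) domain(1) pole] by blast
  define \<Phi> where "\<Phi> r = \<phi> r + radial_primitive h r" for r
  have dirichlet': "u y + radial_primitive h (norm y) = \<Phi> (norm y)" if "y \<in> frontier \<Omega>" for y
    using dirichlet that by (simp add: \<Phi>_def)
  have "mono_on {R0..R} \<Phi>"
    unfolding \<Phi>_def using R_int(1) T(1) phi_C1(2) phi_ge by (intro primitive_shift_mono) auto
  with extremal_radii_equal[OF dom p(1-6) neumann dirichlet' R12[unfolded p(7,8)] T(1)] h_decr
  have radii: "norm p1 = norm p2" by blast
  have "norm y = norm p1" if "y \<in> frontier \<Omega>" for y using p(3)[OF that] radii by linarith
  from radial_if_frontier_sphere[OF this dirichlet']
  have "\<forall>x\<in>closure \<Omega>. u x = \<Phi> (norm p1) - radial_primitive h (norm x)" .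
  then have "\<exists>f. \<forall>x\<in>closure \<Omega>. u x = f (norm x)"
    by (intro exI[of _ "\<lambda>r. \<Phi> (norm p1) - radial_primitive h r"]) simp
  moreover have "\<Omega> = ball 0 (norm p1)"
    using p(5) interior_maximal[OF p(6) domain(1)] radii by auto
  ultimately show ?thesis using p(4) by blast
qed

end
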